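(* Let $(X,\sigma)$ be an infinite mixing one-sided or two-sided synchronizing subshift, let $(Y,g)$ be a dynamical system, and let $\pi\colon(X,\sigma)\to(Y,g)$ be a factor map such that $\pi^{-1}(y)$ is at most countable for each $y\in Y$. Then there exist $\varepsilon>0$, $k\in\mathbb N$ and a dense Mycielski set $T\subset Y$ with $g^k(T)\subset T$ which is syndetically $\varepsilon$-scrambled for $g$.
   Context: A dynamical system $(Y,g)$: compact metric space $Y$ with continuous $g$. A factor map is a continuous surjection with $\pi\circ\sigma=g\circ\pi$. Synchronizing word $s\in L(X)$: $us,sv\in L(X)\Rightarrow usv\in L(X)$; synchronizing subshift: transitive subshift with a synchronizing word. Mixing: $\{n:\sigma^n(U)\cap V\ne\emptyset\}$ cofinite for all nonempty open $U,V$. Syndetic: subset of $\mathbb N$ meeting every set with arbitrarily long runs of consecutive integers. $\mathrm{Asy}(g)=\{(x,y):d(g^nx,g^ny)\to0\}$, $\mathrm{SProx}(g)=\{(x,y):\{n:d(g^nx,g^ny)<\eta\}$ syndetic for all $\eta>0\}$. Syndetically $\varepsilon$-scrambled set: at least two points, every distinct pair in $\mathrm{SProx}(g)\setminus\mathrm{Asy}(g)$ with $\limsup_n d(g^nx,g^ny)\ge\varepsilon$. Mycielski set: countable union of Cantor sets. *)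

theory Defs
  imports "HOL-Analysis.Analysis"
begin

text \<open>Shift map, for both one-sided (index type nat) and two-sided (index type int) sequences.\<close>
definition shift :: "('i::comm_semiring_1 \<Rightarrow> 'a) \<Rightarrow> ('i \<Rightarrow> 'a)" where
  "shift x = (\<lambda>n. x (n + 1))"

definition shift_top :: "('i \<Rightarrow> 'a) topology" where
  "shift_top = product_topology (\<lambda>_. discrete_topology UNIV) UNIV"

definition one_sided_subshift :: "(nat \<Rightarrow> 'a::finite) set \<Rightarrow> bool" where
  "one_sided_subshift X \<longleftrightarrow> X \<noteq> {} \<and> closedin shift_top X \<and> shift ` X \<subseteq> X"

definition two_sided_subshift :: "(int \<Rightarrow> 'a::finite) set \<Rightarrow> bool" where
  "two_sided_subshift X \<longleftrightarrow> X \<noteq> {} \<and> closedin shift_top X \<and> shift ` X = X"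

definition language :: "('i::comm_semiring_1 \<Rightarrow> 'a) set \<Rightarrow> 'a list set" where
  "language X = {map (\<lambda>j. x (i + of_nat j)) [0..<n] | x i n. x \<in> X}"

definition synchronizing_word :: "('i::comm_semiring_1 \<Rightarrow> 'a) set \<Rightarrow> 'a list \<Rightarrow> bool" where
  "synchronizing_word X s \<longleftrightarrow> s \<in> language X \<and>
     (\<forall>u v. u @ s \<in> language X \<and> s @ v \<in> language X \<longrightarrow> u @ s @ v \<in> language X)"

definition transitive_sys :: "'x topology \<Rightarrow> 'x set \<Rightarrow> ('x \<Rightarrow> 'x) \<Rightarrow> bool" where
  "transitive_sys T X f \<longleftrightarrow>
     (\<forall>U V. openin (subtopology T X) U \<and> U \<noteq> {} \<and> openin (subtopology T X) V \<and> V \<noteq> {}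
        \<longrightarrow> (\<exists>n. (f ^^ n) ` U \<inter> V \<noteq> {}))"

definition mixing_sys :: "'x topology \<Rightarrow> 'x set \<Rightarrow> ('x \<Rightarrow> 'x) \<Rightarrow> bool" where
  "mixing_sys T X f \<longleftrightarrow>
     (\<forall>U V. openin (subtopology T X) U \<and> U \<noteq> {} \<and> openin (subtopology T X) V \<and> V \<noteq> {}
        \<longrightarrow> finite {n. (f ^^ n) ` U \<inter> V = {}})"

definition synchronizing_subshift :: "('i::comm_semiring_1 \<Rightarrow> 'a) set \<Rightarrow> bool" where
  "synchronizing_subshift X \<longleftrightarrow> transitive_sys shift_top X shift \<and> (\<exists>s. synchronizing_word X s)"

definition factor_map ::
  "('i::comm_semiring_1 \<Rightarrow> 'a) set \<Rightarrow> 'b::metric_space set \<Rightarrow> ('b \<Rightarrow> 'b) \<Rightarrow> (('i \<Rightarrow> 'a) \<Rightarrow> 'b) \<Rightarrow> bool" where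
  "factor_map X Y g \<pi> \<longleftrightarrow> continuous_map (subtopology shift_top X) (top_of_set Y) \<pi> \<and>
     \<pi> ` X = Y \<and> (\<forall>x\<in>X. \<pi> (shift x) = g (\<pi> x))"

definition syndetic :: "nat set \<Rightarrow> bool" where
  "syndetic S \<longleftrightarrow> (\<forall>A. (\<forall>L. \<exists>a. {a..<a+L} \<subseteq> A) \<longrightarrow> S \<inter> A \<noteq> {})"

definition Asy :: "('b::metric_space \<Rightarrow> 'b) \<Rightarrow> ('b \<times> 'b) set" where
  "Asy g = {(x, y). (\<lambda>n. dist ((g ^^ n) x) ((g ^^ n) y)) \<longlonglongrightarrow> 0}"

definition SProx :: "('b::metric_space \<Rightarrow> 'b) \<Rightarrow> ('b \<times> 'b) set" where
  "SProx g = {(x, y). \<forall>\<eta>>0. syndetic {n. dist ((g ^^ n) x) ((g ^^ n) y) < \<eta>}}"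

definition synd_eps_scrambled :: "('b::metric_space \<Rightarrow> 'b) \<Rightarrow> real \<Rightarrow> 'b set \<Rightarrow> bool" where
  "synd_eps_scrambled g \<epsilon> T \<longleftrightarrow> (\<exists>x\<in>T. \<exists>y\<in>T. x \<noteq> y) \<and>
     (\<forall>x\<in>T. \<forall>y\<in>T. x \<noteq> y \<longrightarrow> (x, y) \<in> SProx g - Asy g \<and>
        limsup (\<lambda>n. ereal (dist ((g ^^ n) x) ((g ^^ n) y))) \<ge> ereal \<epsilon>)"

definition cantor_set :: "'b::metric_space set \<Rightarrow> bool" where
  "cantor_set C \<longleftrightarrow> C \<noteq> {} \<and> compact C \<and> (\<forall>x\<in>C. x islimpt C) \<and>
     (\<forall>x\<in>C. connected_component_set C x = {x})"

definition mycielski_set :: "'b::metric_space set \<Rightarrow> bool" where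
  "mycielski_set T \<longleftrightarrow> (\<exists>\<C>. countable \<C> \<and> (\<forall>C\<in>\<C>. cantor_set C) \<and> T = \<Union>\<C>)"

end

theory Submission
  imports Defs "HOL-Library.Nat_Bijection"
begin

(* We work with bi-infinite sequences all of whose windows lie in the language L of X
   ("admissible" sequences).  Words of L that begin and end with the synchronizing word s can
   be glued along s, so from two marker blocks B0, B1 (containing words u0, u1 whose images
   under \<pi> are 3 \<epsilon> apart) and a connector D we build coded sequences
   ... B0 B0 D B(c j) B(c (j+1)) ...  The code c is sparse: its 1s sit at positions 2^k - n
   and carry the bits of a parameter \<omega>.  Two sparse codes agree off two lacunary sets,
   which makes the images syndetically proximal, and they differ at arbitrarily late blocks,
   which makes the images \<epsilon>-apart infinitely often.  Varying \<omega> over the Cantor space gives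
   Cantor sets, shifting by p amounts to increasing the delay n (invariance under g^p), and
   countably many connectors, one for each word and position, give density. *)

definition win :: "(int \<Rightarrow> 'a) \<Rightarrow> int \<Rightarrow> nat \<Rightarrow> 'a list" where
  "win z i n = map (\<lambda>j. z (i + int j)) [0..<n]"

lemma length_win [simp]: "length (win z i n) = n"
  by (simp add: win_def)

lemma win_nth [simp]: "j < n \<Longrightarrow> win z i n ! j = z (i + int j)"
  by (simp add: win_def)

lemma win_eqI: "length w = n \<Longrightarrow> (\<And>j. j < n \<Longrightarrow> z (i + int j) = w ! j) \<Longrightarrow> win z i n = w"
  by (rule nth_equalityI) auto

lemma win_append: "win z i (a + b) = win z i a @ win z (i + int a) b"
  by (rule nth_equalityI) (auto simp: nth_append add.assoc)

lemma win_sub: "j + m \<le> n \<Longrightarrow> win z (i + int j) m = take m (drop j (win z i n))"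
  by (rule nth_equalityI) (auto simp: add.assoc)

lemma win_shift: "win (\<lambda>i. z (i + int t)) c n = win z (c + int t) n"
  unfolding win_def by (simp add: algebra_simps)

definition occurs_at :: "'a list \<Rightarrow> 'a list \<Rightarrow> nat \<Rightarrow> bool" where
  "occurs_at u w i \<longleftrightarrow> i + length u \<le> length w \<and> take (length u) (drop i w) = u"

lemma occurs_at_end: "length w = n + length u \<Longrightarrow> drop n w = u \<Longrightarrow> occurs_at u w n"
  by (simp add: occurs_at_def)

lemma occurs_at_prefix:
  "occurs_at u w i \<Longrightarrow> take (length w) w' = w \<Longrightarrow> occurs_at u w' i"
proof -
  assume occ: "occurs_at u w i" and pre: "take (length w) w' = w"
  have len: "length w \<le> length w'" using arg_cong[OF pre, of length] by simp
  have "take (length u) (drop i w') = drop i (take (length u + i) (take (length w) w'))"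
    using occ unfolding occurs_at_def by (simp add: take_drop min_def)
  then show ?thesis using occ pre len unfolding occurs_at_def by (simp add: take_drop)
qed

lemma win_occurs_at: "win z c n = w \<Longrightarrow> occurs_at u w i \<Longrightarrow> win z (c + int i) (length u) = u"
  unfolding occurs_at_def using win_sub[of i "length u" n z c] by auto

lemma strict_mono_int_grow:
  fixes f :: "int \<Rightarrow> int"
  assumes "strict_mono f"
  shows "f k + int m \<le> f (k + int m)"
proof (induction m)
  case (Suc m)
  have "f (k + int m) < f (k + int (Suc m))" using assms by (simp add: strict_mono_def)
  then show ?case using Suc by simp
qed simp

lemma int_strict_mono_step:
  fixes f :: "int \<Rightarrow> int"
  assumes step: "\<And>k. f k < f (k + 1)"
  shows "strict_mono f"
proof (rule strict_monoI)
  fix x y :: int assume "x < y"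
  have "f x < f (x + 1 + int d)" for d
  proof (induction d)
    case (Suc d)
    have "f (x + 1 + int d) < f (x + 1 + int d + 1)" by (rule step)
    then show ?case using Suc by (simp add: add.assoc)
  qed (use step in simp)
  from this[of "nat (y - x - 1)"] \<open>x < y\<close> show "f x < f y" by simp
qed

section \<open>Synchronizing mixing languages\<close>

text \<open>The combinatorial properties of the language of a mixing synchronizing subshift that the
  construction uses: closure under subwords, the synchronizing word s, and mixing in the form
  ``for all large n some word of L starts with u and has v at position n''.\<close>
locale sync_language =
  fixes L :: "'a list set" and s :: "'a list"
  assumes factorial: "w \<in> L \<Longrightarrow> drop i (take j w) \<in> L"
    and synchronizing: "u @ s \<in> L \<Longrightarrow> s @ v \<in> L \<Longrightarrow> u @ s @ v \<in> L"
    and s_in_L: "s \<in> L"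
    and mixing: "u \<in> L \<Longrightarrow> v \<in> L \<Longrightarrow> \<exists>N. \<forall>n\<ge>N. \<exists>W\<in>L. length W = n + length v \<and>
              take (length u) W = u \<and> drop n W = v"
begin

definition admissible :: "(int \<Rightarrow> 'a) \<Rightarrow> bool" where
  "admissible z \<longleftrightarrow> (\<forall>i n. win z i n \<in> L)"

lemma admissible_shift: "admissible z \<Longrightarrow> admissible (\<lambda>i. z (i + int t))"
  unfolding admissible_def win_shift by blast

text \<open>A word of L beginning with s and having s again at position n; such words can be
  glued along their common s.\<close>
definition bordered :: "nat \<Rightarrow> 'a list \<Rightarrow> bool" where
  "bordered n B \<longleftrightarrow> B \<in> L \<and> length B = n + length s \<and> take (length s) B = s \<and> drop n B = s"

lemma bordered_nth:
  assumes "bordered n B" "r < length s"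
  shows "B ! r = s ! r" and "B ! (n + r) = s ! r"
proof -
  show "B ! r = s ! r" using assms unfolding bordered_def by (metis nth_take)
  have "n \<le> length B" using assms(1) unfolding bordered_def by simp
  then show "B ! (n + r) = s ! r" using assms nth_drop[of n B r] unfolding bordered_def by simp
qed

lemma glued_stretch_in_L:
  fixes f :: "int \<Rightarrow> int"
  assumes mono: "strict_mono f"
    and seg: "\<And>k. bordered (nat (f (k + 1) - f k)) (win z (f k) (nat (f (k + 1) - f k) + length s))"
  shows "win z (f k) (nat (f (k + int d) - f k) + length s) \<in> L"
proof (induction d arbitrary: k)
  case 0
  have "win z (f k) (length s) = take (length s) (win z (f k) (nat (f (k + 1) - f k) + length s))"
    using win_sub[of 0 "length s" "nat (f (k + 1) - f k) + length s" z "f k"] by simp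
  then show ?case using seg[of k] s_in_L by (simp add: bordered_def)
next
  case (Suc d)
  define a where "a = nat (f (k + 1) - f k)"
  define b where "b = nat (f (k + 1 + int d) - f (k + 1))"
  have fa: "f (k + 1) = f k + int a"
    using mono unfolding a_def strict_mono_def by (smt (verit) nat_0_le)
  have fb: "f (k + 1 + int d) = f (k + 1) + int b"
    using strict_mono_int_grow[OF mono, of "k + 1" d] unfolding b_def by simp
  have s_at: "win z (f (k + 1)) (length s) = s"
    using seg[of "k + 1"] win_sub[of 0 "length s" "nat (f (k + 1 + 1) - f (k + 1)) + length s" z "f (k + 1)"]
    by (simp add: bordered_def)
  have "win z (f k) (a + length s) = win z (f k) a @ s"
    using win_append[of z "f k" a "length s"] s_at fa by simp
  moreover have "win z (f k) (a + length s) \<in> L" using seg[of k] unfolding a_def bordered_def by simp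
  ultimately have left: "win z (f k) a @ s \<in> L" by simp
  have right: "s @ win z (f (k + 1) + int (length s)) b \<in> L"
    using Suc[of "k + 1"] win_append[of z "f (k + 1)" "length s" b] s_at
    unfolding b_def[symmetric] by (simp add: add.commute)
  have "win z (f k) (a + (length s + b)) = win z (f k) a @ s @ win z (f (k + 1) + int (length s)) b"
    using win_append[of z "f k" a "length s + b"] win_append[of z "f k + int a" "length s" b] s_at fa
    by simp
  moreover have "nat (f (k + int (Suc d)) - f k) + length s = a + (length s + b)"
    using fa fb by (simp add: add.assoc)
  ultimately show ?case using synchronizing[OF left right] by (simp add: ac_simps)
qed

text \<open>Hence a sequence glued from bordered words is admissible: every window lies in a long
  enough stretch.\<close>
lemma admissible_if_glued:
  fixes f :: "int \<Rightarrow> int"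
  assumes mono: "strict_mono f"
    and seg: "\<And>k. bordered (nat (f (k + 1) - f k)) (win z (f k) (nat (f (k + 1) - f k) + length s))"
  shows "admissible z"
  unfolding admissible_def
proof (intro allI)
  fix i n
  define m where "m = nat (f 0 - i)"
  define k where "k = - int m"
  have "f k + int m \<le> f (k + int m)" by (rule strict_mono_int_grow[OF mono])
  then have "f k + int m \<le> f 0" by (simp add: k_def)
  then have ki: "f k \<le> i" unfolding m_def by linarith
  define d where "d = nat (i + int n - f k)"
  have kd: "f k + int d \<le> f (k + int d)" by (rule strict_mono_int_grow[OF mono])
  define j where "j = nat (i - f k)"
  let ?W = "win z (f k) (nat (f (k + int d) - f k) + length s)"
  have "win z (f k + int j) n = take n (drop j ?W)"
    by (rule win_sub) (use kd ki in \<open>simp add: d_def j_def\<close>)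
  moreover have "f k + int j = i" using ki by (simp add: j_def)
  moreover have "?W \<in> L" by (rule glued_stretch_in_L[OF mono]) (rule seg)
  then have "take n (drop j ?W) \<in> L" using factorial[of ?W j "n + j"] by (simp add: take_drop)
  ultimately show "win z i n \<in> L" by simp
qed

lemma bordered_extension:
  assumes W: "W \<in> L" and sW: "take (length s) W = s"
  shows "\<exists>K. \<forall>n\<ge>K. \<exists>B. bordered n B \<and> take (length W) B = W"
proof -
  obtain K where K: "\<forall>n\<ge>K. \<exists>B\<in>L. length B = n + length s \<and> take (length W) B = W \<and> drop n B = s"
    using mixing[OF W s_in_L] by blast
  have len: "length s \<le> length W" using arg_cong[OF sW, of length] by simp
  have "take (length s) B = s" if "take (length W) B = W" for B :: "'a list"
  proof -
    have "take (length s) B = take (length s) (take (length W) B)" using len by simp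
    then show ?thesis using that sW by simp
  qed
  then show ?thesis using K unfolding bordered_def by blast
qed

text \<open>Two bordered blocks of a common length p + |s| containing u0 and u1 at the same position;
  they are the two ``letters'' of the coding below.\<close>
lemma marker_blocks_exist:
  assumes u0: "u0 \<in> L" and u1: "u1 \<in> L"
  shows "\<exists>B0 B1 p i. length s < p \<and> bordered p B0 \<and> bordered p B1 \<and>
           occurs_at u0 B0 i \<and> occurs_at u1 B1 i"
proof -
  obtain N0 where N0: "\<forall>n\<ge>N0. \<exists>W\<in>L. length W = n + length u0 \<and> take (length s) W = s \<and> drop n W = u0"
    using mixing[OF s_in_L u0] by blast
  obtain N1 where N1: "\<forall>n\<ge>N1. \<exists>W\<in>L. length W = n + length u1 \<and> take (length s) W = s \<and> drop n W = u1"
    using mixing[OF s_in_L u1] by blast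
  define i where "i = max (max N0 N1) (length s + 1)"
  have "N0 \<le> i" "N1 \<le> i" unfolding i_def by simp_all
  then obtain W0 W1 where
    W0: "W0 \<in> L" "length W0 = i + length u0" "take (length s) W0 = s" "drop i W0 = u0" and
    W1: "W1 \<in> L" "length W1 = i + length u1" "take (length s) W1 = s" "drop i W1 = u1"
    using N0 N1 by meson
  obtain K0 where K0: "\<forall>n\<ge>K0. \<exists>B. bordered n B \<and> take (length W0) B = W0"
    using bordered_extension[OF W0(1,3)] by blast
  obtain K1 where K1: "\<forall>n\<ge>K1. \<exists>B. bordered n B \<and> take (length W1) B = W1"
    using bordered_extension[OF W1(1,3)] by blast
  define p where "p = max (max K0 K1) i"
  have "K0 \<le> p" "K1 \<le> p" unfolding p_def by simp_all
  then obtain B0 B1 where B0: "bordered p B0" "take (length W0) B0 = W0"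
    and B1: "bordered p B1" "take (length W1) B1 = W1"
    using K0 K1 by meson
  have "occurs_at u0 B0 i" using occurs_at_prefix[OF occurs_at_end[OF W0(2,4)] B0(2)] .
  moreover have "occurs_at u1 B1 i" using occurs_at_prefix[OF occurs_at_end[OF W1(2,4)] B1(2)] .
  moreover have "length s < p" unfolding p_def i_def by simp
  ultimately show ?thesis using B0 B1 by blast
qed

lemma connector_exists:
  assumes w: "w \<in> L" and p: "0 < p"
  shows "\<exists>M D q i. 1 \<le> M \<and> bordered (M * p) D \<and> occurs_at w D i \<and> q * int p + int i = c"
proof -
  obtain N where N: "\<forall>n\<ge>N. \<exists>W\<in>L. length W = n + length w \<and> take (length s) W = s \<and> drop n W = w"
    using mixing[OF s_in_L w] by blast
  define n where "n = (N + length s) * p + nat (c mod int p)"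
  have "N + length s \<le> (N + length s) * p" using p by simp
  then have nN: "N \<le> n" unfolding n_def by linarith
  obtain W where W: "W \<in> L" "length W = n + length w" "take (length s) W = s" "drop n W = w"
    using N nN by blast
  obtain K where K: "\<forall>m\<ge>K. \<exists>B. bordered m B \<and> take (length W) B = W"
    using bordered_extension[OF W(1,3)] by blast
  define M where "M = K + n + length w + 1"
  have "M \<le> M * p" using p by simp
  then have "K \<le> M * p" unfolding M_def by linarith
  then obtain D where D: "bordered (M * p) D" "take (length W) D = W"
    using K by blast
  have "occurs_at w D n" using occurs_at_prefix[OF occurs_at_end[OF W(2,4)] D(2)] .
  moreover have "((c - int n) div int p) * int p + int n = c"
  proof -
    have "int n = int (N + length s) * int p + c mod int p" using p unfolding n_def by simp
    then have "c - int n = (c div int p - int (N + length s)) * int p"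
      by (simp add: algebra_simps minus_mod_eq_mult_div[symmetric])
    then show ?thesis using p by simp
  qed
  moreover have "1 \<le> M" unfolding M_def by simp
  ultimately show ?thesis using D(1) by blast
qed

lemma win_eq_bordered:
  assumes W: "bordered P W"
    and body: "\<And>k. k < P \<Longrightarrow> z (i + int k) = W ! k"
    and border: "\<And>r. r < length s \<Longrightarrow> z (i + int P + int r) = s ! r"
  shows "win z i (P + length s) = W"
proof (rule win_eqI)
  show "length W = P + length s" using W by (simp add: bordered_def)
  fix k assume k: "k < P + length s"
  show "z (i + int k) = W ! k"
  proof (cases "k < P")
    case False
    then obtain r where r: "k = P + r" "r < length s" using k
      by (metis add_less_cancel_left le_Suc_ex not_less)
    then show ?thesis using border[of r] bordered_nth(2)[OF W r(2)] by (simp add: add.assoc)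
  qed (rule body)
qed

end

section \<open>Sequences coded by two marker blocks\<close>

text \<open>Since consecutive
  blocks overlap in the synchronizing word s, any sequence of them, preceded by a connector,
  is admissible.\<close>
locale block_code = sync_language +
  fixes B0 B1 :: "'a list" and p :: nat
  assumes s_less_p: "length s < p"
    and bordered_B0: "bordered p B0" and bordered_B1: "bordered p B1"
begin

lemma p_pos: "0 < p"
  using s_less_p by simp

definition block :: "bool \<Rightarrow> 'a list" where
  "block b = (if b then B1 else B0)"

lemma bordered_block: "bordered p (block b)"
  using bordered_B0 bordered_B1 by (simp add: block_def)

definition connector :: "nat \<Rightarrow> 'a list \<Rightarrow> bool" where
  "connector M D \<longleftrightarrow> 1 \<le> M \<and> bordered (M * p) D"

lemma connector_B0: "connector 1 B0"
  using bordered_B0 by (simp add: connector_def)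

text \<open>The coded sequence: block j (positions j p, ..., j p + p - 1) is B0 for j < q, the
  connector D occupies blocks q, ..., q + M - 1, and every later block j is block (c j).\<close>
definition coded :: "int \<Rightarrow> nat \<Rightarrow> 'a list \<Rightarrow> (int \<Rightarrow> bool) \<Rightarrow> int \<Rightarrow> 'a" where
  "coded q M D c n = (let j = n div int p in
     if j < q then B0 ! nat (n mod int p)
     else if j < q + int M then D ! nat (n - q * int p)
     else block (c j) ! nat (n mod int p))"

lemma coded_at:
  assumes "r < p"
  shows "coded q M D c (j * int p + int r) =
    (if j < q then B0 ! r else if j < q + int M then D ! nat ((j - q) * int p + int r)
     else block (c j) ! r)"
proof -
  have d: "(j * int p + int r) div int p = j" and m: "(j * int p + int r) mod int p = int r"
    using assms by simp_all
  have e: "j * int p + int r - q * int p = (j - q) * int p + int r" by (simp add: algebra_simps)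
  show ?thesis unfolding coded_def Let_def d m e by simp
qed

lemma coded_s_at_cut:
  assumes D: "connector M D" and r: "r < length s" and j: "j \<le> q \<or> q + int M \<le> j"
  shows "coded q M D c (j * int p + int r) = s ! r"
proof -
  have rp: "r < p" using r s_less_p by simp
  consider "j < q" | "j = q" | "q + int M \<le> j" using j by linarith
  then show ?thesis
  proof cases
    case 1 then show ?thesis using coded_at[OF rp] bordered_nth(1)[OF bordered_B0 r] by simp
  next
    case 2 then show ?thesis
      using coded_at[OF rp] bordered_nth(1)[of "M * p" D r] D r by (simp add: connector_def)
  next
    case 3 then show ?thesis using coded_at[OF rp] bordered_nth(1)[OF bordered_block r] by simp
  qed
qed

lemma coded_window_B0:
  assumes D: "connector M D" and j: "j < q"
  shows "win (coded q M D c) (j * int p) (p + length s) = B0"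
proof (rule win_eq_bordered[OF bordered_B0])
  show "coded q M D c (j * int p + int k) = B0 ! k" if "k < p" for k
    using coded_at[OF that] j by simp
  show "coded q M D c (j * int p + int p + int r) = s ! r" if "r < length s" for r
    using coded_s_at_cut[OF D that, of "j + 1"] j by (simp add: algebra_simps)
qed

lemma coded_window_connector:
  assumes D: "connector M D"
  shows "win (coded q M D c) (q * int p) (M * p + length s) = D"
proof (rule win_eq_bordered)
  show "bordered (M * p) D" using D by (simp add: connector_def)
  show "coded q M D c (q * int p + int k) = D ! k" if k: "k < M * p" for k
  proof -
    have "k = k div p * p + k mod p" "k mod p < p" "k div p < M"
      using k p_pos by (simp_all add: less_mult_imp_div_less)
    moreover have "int k = int (k div p) * int p + int (k mod p)"
      using div_mult_mod_eq[of k p] by (metis of_nat_add of_nat_mult)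
    then have "q * int p + int k = (q + int (k div p)) * int p + int (k mod p)"
      by (simp add: algebra_simps)
    ultimately show ?thesis using coded_at[of "k mod p"]
      by (simp add: nat_add_distrib nat_mult_distrib)
  qed
  show "coded q M D c (q * int p + int (M * p) + int r) = s ! r" if "r < length s" for r
    using coded_s_at_cut[OF D that, of "q + int M"] by (simp add: algebra_simps)
qed

lemma coded_window_block:
  assumes D: "connector M D" and j: "q + int M \<le> j"
  shows "win (coded q M D c) (j * int p) (p + length s) = block (c j)"
proof (rule win_eq_bordered[OF bordered_block])
  show "coded q M D c (j * int p + int k) = block (c j) ! k" if "k < p" for k
    using coded_at[OF that] j by simp
  show "coded q M D c (j * int p + int p + int r) = s ! r" if "r < length s" for r
    using coded_s_at_cut[OF D that, of "j + 1"] j by (simp add: algebra_simps)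
qed

text \<open>Coded sequences are admissible: cut them before each B0, before the connector and
  before each later block, and glue.\<close>
theorem coded_admissible:
  assumes D: "connector M D"
  shows "admissible (coded q M D c)"
proof (rule admissible_if_glued)
  define f where "f k = (if k \<le> 0 then (k + q) * int p else (k + q + int M - 1) * int p)" for k
  have M1: "1 \<le> M" using D by (simp add: connector_def)
  show "strict_mono f"
    by (rule int_strict_mono_step) (use p_pos M1 in \<open>auto simp: f_def algebra_simps\<close>)
  show "bordered (nat (f (k + 1) - f k)) (win (coded q M D c) (f k) (nat (f (k + 1) - f k) + length s))"
    for k
  proof -
    consider "k < 0" | "k = 0" | "0 < k" by linarith
    then show ?thesis
    proof cases
      case 1
      then have "f k = (k + q) * int p" "nat (f (k + 1) - f k) = p"
        unfolding f_def by (auto simp: algebra_simps)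
      then show ?thesis using coded_window_B0[OF D, of "k + q"] 1 bordered_B0 by simp
    next
      case 2
      then have "f k = q * int p" "nat (f (k + 1) - f k) = M * p"
        unfolding f_def by (auto simp: algebra_simps nat_mult_distrib)
      then show ?thesis using coded_window_connector[OF D] D by (simp add: connector_def)
    next
      case 3
      then have "f k = (k + q + int M - 1) * int p" "nat (f (k + 1) - f k) = p"
        unfolding f_def by (auto simp: algebra_simps)
      then show ?thesis using coded_window_block[OF D, of q "k + q + int M - 1"] 3 bordered_block
        by simp
    qed
  qed
qed

lemma coded_shift:
  "(\<lambda>i. coded q M D c (i + int t * int p)) = coded (q - int t) M D (\<lambda>j. c (j + int t))"
proof
  fix i
  have d: "(i + int t * int p) div int p = i div int p + int t" using p_pos by simp
  have m: "(i + int t * int p) mod int p = i mod int p" by simp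
  have e: "i + int t * int p - q * int p = i - (q - int t) * int p" by (simp add: algebra_simps)
  show "coded q M D c (i + int t * int p) = coded (q - int t) M D (\<lambda>j. c (j + int t)) i"
    unfolding coded_def Let_def d m e by auto
qed

lemma coded_distinct:
  assumes D: "connector M D" and j: "q + int M \<le> j" and c: "c j \<noteq> c' j" and B: "B0 \<noteq> B1"
  shows "\<exists>r. coded q M D c (j * int p + int r) \<noteq> coded q M D c' (j * int p + int r)"
proof -
  have "block (c j) \<noteq> block (c' j)" using c B by (simp add: block_def)
  then have "win (coded q M D c) (j * int p) (p + length s) \<noteq> win (coded q M D c') (j * int p) (p + length s)"
    using coded_window_block[OF D j] by simp
  then show ?thesis unfolding win_def by auto
qed

end

section \<open>Sparse codes\<close>

text \<open>Every bit of \<eta> thus appears at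
  infinitely many, exponentially sparse positions; shifting the code changes only the delay.\<close>
definition sparse_code :: "nat \<Rightarrow> (nat \<Rightarrow> bool) \<Rightarrow> int \<Rightarrow> bool" where
  "sparse_code n \<eta> j \<longleftrightarrow> (\<exists>k. j + int n = 2 ^ k \<and> \<eta> (fst (prod_decode k)))"

lemma sparse_code_shift: "sparse_code n \<eta> (j + int t) = sparse_code (n + t) \<eta> j"
  unfolding sparse_code_def by (simp add: algebra_simps)

lemma sparse_code_at_power: "sparse_code n \<eta> (2 ^ k - int n) = \<eta> (fst (prod_decode k))"
  unfolding sparse_code_def by auto

lemma sparse_code_agree:
  assumes "\<And>i. i \<le> B \<Longrightarrow> \<eta> i = \<eta>' i" and "j + int n \<le> int B"
  shows "sparse_code n \<eta> j = sparse_code n \<eta>' j"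
proof -
  have "\<eta> (fst (prod_decode k)) = \<eta>' (fst (prod_decode k))" if "j + int n = 2 ^ k" for k
  proof -
    have "int k < 2 ^ k" using less_exp[of k] by (metis of_nat_less_iff of_nat_numeral of_nat_power)
    then have "k \<le> B" using that assms(2) by linarith
    moreover have "fst (prod_decode k) \<le> k"
      using le_prod_encode_1[of "fst (prod_decode k)" "snd (prod_decode k)"] by simp
    ultimately show ?thesis using assms(1) by simp
  qed
  then show ?thesis unfolding sparse_code_def by blast
qed

lemma not_power_of_two:
  fixes d :: int
  assumes "d \<noteq> 0" "2 * \<bar>d\<bar> < 2 ^ k"
  shows "2 ^ k + d \<noteq> 2 ^ k'"
proof
  assume k': "2 ^ k + d = 2 ^ k'"
  have k0: "k > 0" using assms by (cases k) auto
  show False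
  proof (cases k' k rule: linorder_cases)
    case less
    then have "(2::int) ^ k' \<le> 2 ^ (k - 1)" by (intro power_increasing) auto
    moreover have "(2::int) ^ k = 2 * 2 ^ (k - 1)" using k0 by (cases k) simp_all
    ultimately show False using k' assms by linarith
  next
    case greater
    then have "(2::int) ^ (k + 1) \<le> 2 ^ k'" by (intro power_increasing) auto
    then show False using k' assms by simp
  qed (use k' assms in simp)
qed

lemma sparse_codes_differ:
  assumes "\<eta> 0" "\<eta>' 0" and "n \<noteq> n' \<or> \<eta> \<noteq> \<eta>'"
  shows "\<exists>j\<ge>J. sparse_code n \<eta> j \<noteq> sparse_code n' \<eta>' j"
proof -
  have grow: "int r < 2 ^ prod_encode (i, r)" for i r
  proof -
    have "r \<le> prod_encode (i, r)" by (rule le_prod_encode_2)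
    also have "prod_encode (i, r) < 2 ^ prod_encode (i, r)" by (rule less_exp)
    finally show ?thesis by (metis of_nat_less_iff of_nat_numeral of_nat_power)
  qed
  show ?thesis
  proof (cases "n = n'")
    case False
    define d where "d = int n' - int n"
    define k where "k = prod_encode (0, nat (\<bar>J\<bar> + int n + 2 * \<bar>d\<bar>))"
    define j where "j = 2 ^ k - int n"
    have kb: "\<bar>J\<bar> + int n + 2 * \<bar>d\<bar> < 2 ^ k" using grow unfolding k_def by (smt (verit) int_nat_eq)
    have "sparse_code n \<eta> j" unfolding j_def sparse_code_at_power k_def using assms(1) by simp
    moreover have "\<not> sparse_code n' \<eta>' j"
      using not_power_of_two[of d k] False kb unfolding sparse_code_def j_def d_def
      by (auto simp: algebra_simps)
    moreover have "J \<le> j" using kb unfolding j_def by linarith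
    ultimately show ?thesis by blast
  next
    case True
    then obtain i where i: "\<eta> i \<noteq> \<eta>' i" using assms(3) by blast
    define k where "k = prod_encode (i, nat (\<bar>J\<bar> + int n))"
    define j where "j = 2 ^ k - int n"
    have kb: "\<bar>J\<bar> + int n < 2 ^ k" using grow unfolding k_def by (smt (verit) int_nat_eq)
    have "sparse_code n \<eta> j = \<eta> i" "sparse_code n' \<eta>' j = \<eta>' i"
      unfolding j_def k_def using True sparse_code_at_power by simp_all
    moreover have "J \<le> j" using kb unfolding j_def by linarith
    ultimately show ?thesis using i by metis
  qed
qed

text \<open>Packs a number m and a bit sequence \<omega> injectively into a bit sequence beginning
  with True (as sparse_codes_differ requires).\<close>
definition tagged :: "nat \<Rightarrow> (nat \<Rightarrow> bool) \<Rightarrow> nat \<Rightarrow> bool" where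
  "tagged m \<omega> i = (if i \<le> m then True else if i = Suc m then False else \<omega> (i - m - 2))"

lemma tagged_0: "tagged m \<omega> 0"
  by (simp add: tagged_def)

lemma tagged_inj: "tagged m \<omega> = tagged m' \<omega>' \<Longrightarrow> m = m' \<and> \<omega> = \<omega>'"
proof -
  assume e: "tagged m \<omega> = tagged m' \<omega>'"
  have "m = m'"
  proof (rule ccontr)
    assume "m \<noteq> m'"
    then show False
      using fun_cong[OF e, of "Suc (min m m')"] by (simp add: tagged_def min_def split: if_splits)
  qed
  moreover have "\<omega> i = \<omega>' i" for i using fun_cong[OF e, of "i + m + 2"] \<open>m = m'\<close>
    by (simp add: tagged_def)
  ultimately show ?thesis by blast
qed

lemma tagged_agree: "(\<And>i. i < K \<Longrightarrow> \<omega> i = \<omega>' i) \<Longrightarrow> i \<le> K \<Longrightarrow> tagged m \<omega> i = tagged m \<omega>' i"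
  by (simp add: tagged_def)

definition near_powers :: "nat \<Rightarrow> nat \<Rightarrow> int \<Rightarrow> nat \<Rightarrow> bool" where
  "near_powers p R a t \<longleftrightarrow> (\<exists>k. \<bar>int t - (2 ^ k * int p - a)\<bar> \<le> int R)"

lemma power_two_gap: "k \<noteq> k' \<Longrightarrow> (2::int) ^ min k k' \<le> \<bar>2 ^ k - 2 ^ k'\<bar>"
proof (induction k k' rule: linorder_wlog)
  case (le k k')
  then have "(2::int) ^ (k + 1) \<le> 2 ^ k'" by (intro power_increasing) auto
  then show ?case using le by simp
next
  case (sym k k')
  then show ?case by (simp add: min.commute abs_minus_commute)
qed

text \<open>Far out, two points at distance between W and 2 W cannot both be near the same lacunary
  set, because its gaps exceed 2 W + 2 R.\<close>
lemma near_powers_gap: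
  fixes a :: int and R W p T :: nat
  assumes p: "0 < p" and W: "2 * R < W"
    and T: "int R + \<bar>a\<bar> + int ((2 * W + 2 * R + 1) * p) \<le> int T"
    and t: "T \<le> t" "t + W \<le> t'" "t' \<le> t + 2 * W"
  shows "\<not> (near_powers p R a t \<and> near_powers p R a t')"
proof
  assume "near_powers p R a t \<and> near_powers p R a t'"
  then obtain k k' where k: "\<bar>int t - (2 ^ k * int p - a)\<bar> \<le> int R"
    and k': "\<bar>int t' - (2 ^ k' * int p - a)\<bar> \<le> int R"
    unfolding near_powers_def by blast
  define X where "X = int (2 * W + 2 * R + 1)"
  have "k \<noteq> k'" using k k' t W by auto
  have Xp: "X * int p = int ((2 * W + 2 * R + 1) * p)" unfolding X_def by (simp add: ring_distribs)
  have "int T \<le> int t" "int t \<le> int t'" using t by simp_all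
  then have "X * int p \<le> 2 ^ k * int p" and "X * int p \<le> 2 ^ k' * int p"
    using k k' T Xp by linarith+
  then have "X \<le> 2 ^ k" "X \<le> 2 ^ k'" using p by (simp_all add: mult_le_cancel_right)
  then have "X \<le> 2 ^ min k k'" by (simp add: min_def)
  also have "\<dots> \<le> \<bar>2 ^ k - 2 ^ k'\<bar>" using power_two_gap[OF \<open>k \<noteq> k'\<close>] .
  also have "\<dots> \<le> \<bar>2 ^ k - 2 ^ k'\<bar> * int p" using p by (simp add: mult_le_cancel_left1)
  also have "\<dots> = \<bar>(2 ^ k - 2 ^ k') * int p\<bar>" by (simp add: abs_mult)
  also have "\<dots> = \<bar>2 ^ k * int p - 2 ^ k' * int p\<bar>" by (simp add: left_diff_distrib)
  finally show False using k k' t unfolding X_def by linarith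
qed

lemma syndetic_mono: "S \<subseteq> S' \<Longrightarrow> syndetic S \<Longrightarrow> syndetic S'"
  unfolding syndetic_def by blast

text \<open>A set whose complement lies, far out, near two lacunary sets is syndetic: a long
  interval contains three points at mutual distances W and 2 W, and each lacunary set
  can be near at most one of them.\<close>
lemma syndetic_avoiding_near_powers:
  fixes a b Tlow :: int and R p :: nat
  assumes p: "0 < p"
    and far: "\<And>t. t \<notin> S \<Longrightarrow> int t < Tlow \<or> near_powers p R a t \<or> near_powers p R b t"
  shows "syndetic S"
  unfolding syndetic_def
proof (intro allI impI)
  fix A :: "nat set"
  assume thick: "\<forall>L. \<exists>a. {a..<a + L} \<subseteq> A"
  define W where "W = 2 * R + 1"
  have W: "2 * R < W" unfolding W_def by simp
  define T where "T = nat (max Tlow 0) + R + nat \<bar>a\<bar> + nat \<bar>b\<bar> + (2 * W + 2 * R + 1) * p"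
  obtain a0 where a0: "{a0..<a0 + (T + 2 * W + 1)} \<subseteq> A" using thick by blast
  define t0 where "t0 = a0 + T"
  have inA: "t0 \<in> A" "t0 + W \<in> A" "t0 + 2 * W \<in> A" using a0 unfolding t0_def by auto
  have Tc: "int R + \<bar>c\<bar> + int ((2 * W + 2 * R + 1) * p) \<le> int T" if "c = a \<or> c = b" for c
    using that unfolding T_def by auto
  have gap: "\<not> (near_powers p R c t \<and> near_powers p R c t')"
    if "c = a \<or> c = b" "t0 \<le> t" "t + W \<le> t'" "t' \<le> t + 2 * W" for c t t'
    by (rule near_powers_gap[OF p, where T = T]) (use that Tc[OF that(1)] W in \<open>auto simp: t0_def\<close>)
  have near: "near_powers p R a t \<or> near_powers p R b t" if "t \<notin> S" "t0 \<le> t" for t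
    using far[OF that(1)] that(2) unfolding t0_def T_def by linarith
  have pairs: "\<not> (near_powers p R c t0 \<and> near_powers p R c (t0 + W))"
    "\<not> (near_powers p R c t0 \<and> near_powers p R c (t0 + 2 * W))"
    "\<not> (near_powers p R c (t0 + W) \<and> near_powers p R c (t0 + 2 * W))"
    if "c = a \<or> c = b" for c
    by (rule gap; use that in simp)+
  show "S \<inter> A \<noteq> {}"
  proof
    assume "S \<inter> A = {}"
    then have "t0 \<notin> S" "t0 + W \<notin> S" "t0 + 2 * W \<notin> S" using inA by auto
    then have "near_powers p R a t0 \<or> near_powers p R b t0"
      "near_powers p R a (t0 + W) \<or> near_powers p R b (t0 + W)"
      "near_powers p R a (t0 + 2 * W) \<or> near_powers p R b (t0 + 2 * W)"
      using near[of t0] near[of "t0 + W"] near[of "t0 + 2 * W"] by auto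
    then show False using pairs[of a] pairs[of b] by blast
  qed
qed

context block_code
begin

lemma coded_eq_beyond:
  assumes "q + int M \<le> x div int p" "q' + int M' \<le> x div int p" "c (x div int p) = c' (x div int p)"
  shows "coded q M D c x = coded q' M' D' c' x"
  using assms unfolding coded_def Let_def by auto

lemma near_powers_of_code:
  assumes code: "sparse_code n \<eta> (m div int p)" and i: "\<bar>i\<bar> \<le> int N" and m: "m = i + int t"
  shows "near_powers p (N + p) (int n * int p) t"
proof -
  obtain k where k: "m div int p + int n = 2 ^ k" using code unfolding sparse_code_def by blast
  have "m div int p * int p \<le> m" "m < m div int p * int p + int p"
    using p_pos by (simp_all add: mult.commute minus_mod_eq_mult_div[symmetric])
  moreover have "2 ^ k * int p - int n * int p = m div int p * int p"
    by (simp add: algebra_simps flip: k)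
  ultimately have "\<bar>int t - (2 ^ k * int p - int n * int p)\<bar> \<le> int (N + p)"
    using i m by auto
  then show ?thesis unfolding near_powers_def by blast
qed

text \<open>Two sequences with sparse codes agree on the window [t - N, t + N] for a syndetic set
  of times t: past the connectors they can only differ inside 1-blocks of either code.\<close>
lemma coded_agree_syndetic:
  "syndetic {t. \<forall>i. \<bar>i\<bar> \<le> int N \<longrightarrow>
     coded q M D (sparse_code n \<eta>) (i + int t) = coded q' M' D' (sparse_code n' \<eta>') (i + int t)}"
  (is "syndetic {t. ?agree t}")
proof (rule syndetic_avoiding_near_powers[OF p_pos])
  define J where "J = max (q + int M) (q' + int M')"
  fix t assume "t \<notin> {t. ?agree t}"
  then obtain i where i: "\<bar>i\<bar> \<le> int N"
    and ne: "coded q M D (sparse_code n \<eta>) (i + int t) \<noteq> coded q' M' D' (sparse_code n' \<eta>') (i + int t)"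
    by blast
  define j where "j = (i + int t) div int p"
  have "\<not> (J \<le> j \<and> sparse_code n \<eta> j = sparse_code n' \<eta>' j)"
  proof
    assume "J \<le> j \<and> sparse_code n \<eta> j = sparse_code n' \<eta>' j"
    then have "coded q M D (sparse_code n \<eta>) (i + int t) = coded q' M' D' (sparse_code n' \<eta>') (i + int t)"
      by (intro coded_eq_beyond) (simp_all add: J_def j_def)
    with ne show False by contradiction
  qed
  then consider "j < J" | "sparse_code n \<eta> j" | "sparse_code n' \<eta>' j" by (cases "J \<le> j") auto
  then show "int t < (J + 1) * int p + int N \<or> near_powers p (N + p) (int n * int p) t \<or>
      near_powers p (N + p) (int n' * int p) t"
  proof cases
    case 1
    have "i + int t < (j + 1) * int p"
      using p_pos unfolding j_def by (simp add: algebra_simps minus_mod_eq_mult_div[symmetric])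
    also have "\<dots> \<le> J * int p" using 1 p_pos by (intro mult_right_mono) auto
    finally have "i + int t < J * int p" .
    moreover have "(J + 1) * int p = J * int p + int p" by (simp add: distrib_right)
    moreover have "0 < int p" using p_pos by simp
    ultimately show ?thesis using i by linarith
  next
    case 2 then show ?thesis using near_powers_of_code[OF _ i] unfolding j_def by blast
  next
    case 3 then show ?thesis using near_powers_of_code[OF _ i] unfolding j_def by blast
  qed
qed

end

lemma limsup_ge_frequently:
  fixes f :: "nat \<Rightarrow> real"
  assumes "\<And>T. \<exists>t\<ge>T. c \<le> f t"
  shows "ereal c \<le> limsup (\<lambda>t. ereal (f t))"
  unfolding limsup_INF_SUP
proof (rule INF_greatest)
  fix T :: nat
  obtain t where "t \<ge> T" "c \<le> f t" using assms by blast
  then show "ereal c \<le> (SUP m\<in>{T..}. ereal (f m))" by (intro SUP_upper2[of t]) auto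
qed

locale coded_factor = block_code +
  fixes E :: "(int \<Rightarrow> 'a) \<Rightarrow> 'b::metric_space" and Y :: "'b set" and g :: "'b \<Rightarrow> 'b"
    and \<epsilon> :: real and c0 :: int and u0 u1 :: "'a list" and off :: nat
  assumes E_in_Y: "admissible z \<Longrightarrow> E z \<in> Y"
    and E_shift: "admissible z \<Longrightarrow> E (\<lambda>i. z (i + int t)) = (g ^^ t) (E z)"
    and E_local: "\<eta> > 0 \<Longrightarrow> \<exists>N. \<forall>z z'. admissible z \<and> admissible z' \<and>
                    (\<forall>i. \<bar>i\<bar> \<le> int N \<longrightarrow> z i = z' i) \<longrightarrow> dist (E z) (E z') < \<eta>"
    and eps_pos: "\<epsilon> > 0"
    and E_separates: "admissible z \<Longrightarrow> admissible z' \<Longrightarrow> win z c0 (length u0) = u0 \<Longrightarrow>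
                    win z' c0 (length u1) = u1 \<Longrightarrow> \<epsilon> \<le> dist (E z) (E z')"
    and u0_in_B0: "occurs_at u0 B0 off" and u1_in_B1: "occurs_at u1 B1 off"
    and same_length: "length u0 = length u1"
begin

lemma marker_window:
  assumes D: "connector M D" and j: "q + int M \<le> j"
  shows "win (coded q M D c) (j * int p + int off) (length u0) = (if c j then u1 else u0)"
proof (cases "c j")
  case True
  then have "win (coded q M D c) (j * int p) (p + length s) = B1"
    using coded_window_block[OF D j] by (simp add: block_def)
  then show ?thesis using win_occurs_at[OF _ u1_in_B1] same_length True by simp
next
  case False
  then have "win (coded q M D c) (j * int p) (p + length s) = B0"
    using coded_window_block[OF D j] by (simp add: block_def)
  then show ?thesis using win_occurs_at[OF _ u0_in_B0] False by simp
qed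

lemma coded_pair_proximal:
  fixes q q' :: int and n n' :: nat and \<eta> \<eta>' :: "nat \<Rightarrow> bool"
  assumes D: "connector M D" and D': "connector M' D'"
  defines "z \<equiv> coded q M D (sparse_code n \<eta>)" and "z' \<equiv> coded q' M' D' (sparse_code n' \<eta>')"
  shows "(E z, E z') \<in> SProx g"
  unfolding SProx_def
proof (clarsimp)
  fix e :: real assume "0 < e"
  then obtain N where N: "\<forall>z z'. admissible z \<and> admissible z' \<and> (\<forall>i. \<bar>i\<bar> \<le> int N \<longrightarrow> z i = z' i)
      \<longrightarrow> dist (E z) (E z') < e" using E_local by blast
  have adm: "admissible z" "admissible z'" unfolding z_def z'_def using coded_admissible D D' by auto
  have "dist ((g ^^ t) (E z)) ((g ^^ t) (E z')) < e"
    if "\<forall>i. \<bar>i\<bar> \<le> int N \<longrightarrow> z (i + int t) = z' (i + int t)" for t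
  proof -
    have "dist (E (\<lambda>i. z (i + int t))) (E (\<lambda>i. z' (i + int t))) < e"
      using N that admissible_shift adm by blast
    then show ?thesis using E_shift adm by simp
  qed
  then have "{t. \<forall>i. \<bar>i\<bar> \<le> int N \<longrightarrow> z (i + int t) = z' (i + int t)}
      \<subseteq> {t. dist ((g ^^ t) (E z)) ((g ^^ t) (E z')) < e}" by blast
  then show "syndetic {t. dist ((g ^^ t) (E z)) ((g ^^ t) (E z')) < e}"
    by (rule syndetic_mono) (unfold z_def z'_def, rule coded_agree_syndetic)
qed

text \<open>Two distinct coded sequences are \<epsilon>-apart at arbitrarily late times: far out their
  sparse codes differ at some block j, whose markers u0, u1 then end up at position c0.\<close>
lemma coded_pair_separated:
  fixes q q' :: int and n n' :: nat and \<eta> \<eta>' :: "nat \<Rightarrow> bool"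
  assumes D: "connector M D" and D': "connector M' D'"
    and "\<eta> 0" "\<eta>' 0" and ne: "n \<noteq> n' \<or> \<eta> \<noteq> \<eta>'"
  defines "z \<equiv> coded q M D (sparse_code n \<eta>)" and "z' \<equiv> coded q' M' D' (sparse_code n' \<eta>')"
  shows "\<exists>t\<ge>T. \<epsilon> \<le> dist ((g ^^ t) (E z)) ((g ^^ t) (E z'))"
proof -
  have adm: "admissible z" "admissible z'" unfolding z_def z'_def using coded_admissible D D' by auto
  define J where "J = max (max (q + int M) (q' + int M')) (\<bar>c0\<bar> + int T)"
  obtain j where j: "j \<ge> J" "sparse_code n \<eta> j \<noteq> sparse_code n' \<eta>' j"
    using sparse_codes_differ[OF assms(3-5)] by blast
  have "0 \<le> j" using j(1) unfolding J_def by (smt (verit) abs_ge_zero of_nat_0_le_iff)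
  then have "j * 1 \<le> j * int p" using p_pos by (intro mult_left_mono) auto
  define t where "t = nat (j * int p + int off - c0)"
  have t: "c0 + int t = j * int p + int off" "T \<le> t" using j(1) \<open>j * 1 \<le> j * int p\<close> unfolding t_def J_def
    by auto
  have w: "win (\<lambda>i. z (i + int t)) c0 (length u0) = (if sparse_code n \<eta> j then u1 else u0)"
    "win (\<lambda>i. z' (i + int t)) c0 (length u0) = (if sparse_code n' \<eta>' j then u1 else u0)"
    unfolding win_shift t(1) z_def z'_def using marker_window D D' j(1) unfolding J_def by auto
  have "\<epsilon> \<le> dist (E (\<lambda>i. z (i + int t))) (E (\<lambda>i. z' (i + int t)))"
  proof (cases "sparse_code n \<eta> j")
    case True
    then have "\<epsilon> \<le> dist (E (\<lambda>i. z' (i + int t))) (E (\<lambda>i. z (i + int t)))"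
      using E_separates[OF admissible_shift[OF adm(2)] admissible_shift[OF adm(1)]] w j(2) same_length
      by simp
    then show ?thesis by (simp add: dist_commute)
  next
    case False
    then show ?thesis
      using E_separates[OF admissible_shift[OF adm(1)] admissible_shift[OF adm(2)]] w j(2) same_length
      by simp
  qed
  then show ?thesis using E_shift adm t(2) by auto
qed

theorem coded_pair_scrambled:
  fixes q q' :: int and n n' :: nat and \<eta> \<eta>' :: "nat \<Rightarrow> bool"
  assumes D: "connector M D" and D': "connector M' D'"
    and h: "\<eta> 0" "\<eta>' 0" "n \<noteq> n' \<or> \<eta> \<noteq> \<eta>'"
  defines "x \<equiv> E (coded q M D (sparse_code n \<eta>))" and "y \<equiv> E (coded q' M' D' (sparse_code n' \<eta>'))"
  shows "(x, y) \<in> SProx g - Asy g" and "ereal \<epsilon> \<le> limsup (\<lambda>t. ereal (dist ((g ^^ t) x) ((g ^^ t) y)))"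
    and "x \<noteq> y"
proof -
  have sep: "\<exists>t\<ge>T. \<epsilon> \<le> dist ((g ^^ t) x) ((g ^^ t) y)" for T
    unfolding x_def y_def by (rule coded_pair_separated[OF D D' h])
  show ls: "ereal \<epsilon> \<le> limsup (\<lambda>t. ereal (dist ((g ^^ t) x) ((g ^^ t) y)))"
    by (rule limsup_ge_frequently) (rule sep)
  have "(x, y) \<notin> Asy g"
  proof
    assume "(x, y) \<in> Asy g"
    then have "(\<lambda>t. ereal (dist ((g ^^ t) x) ((g ^^ t) y))) \<longlonglongrightarrow> ereal 0"
      unfolding Asy_def by simp
    then have "limsup (\<lambda>t. ereal (dist ((g ^^ t) x) ((g ^^ t) y))) = ereal 0"
      by (intro lim_imp_Limsup) auto
    then show False using ls eps_pos by simp
  qed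
  then show "(x, y) \<in> SProx g - Asy g" using coded_pair_proximal[OF D D'] unfolding x_def y_def
    by blast
  show "x \<noteq> y" using sep[of 0] eps_pos by auto
qed

end

section \<open>Cantor sets as images of the Cantor space\<close>

abbreviation cantor_space :: "(nat \<Rightarrow> bool) topology" where
  "cantor_space \<equiv> product_topology (\<lambda>_. discrete_topology UNIV) UNIV"

lemma topspace_cantor_space: "topspace cantor_space = UNIV"
  by (simp add: PiE_UNIV_domain)

lemma compact_cantor_space: "compact_space cantor_space"
  by (simp add: compact_space_product_topology compact_space_discrete_topology)

lemma openin_cantor_space:
  assumes "\<And>\<omega>. \<omega> \<in> S \<Longrightarrow> \<exists>K. \<forall>\<omega>'. (\<forall>i<K. \<omega>' i = \<omega> i) \<longrightarrow> \<omega>' \<in> S"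
  shows "openin cantor_space S"
  unfolding openin_product_topology_alt
proof (intro ballI)
  fix \<omega> assume "\<omega> \<in> S"
  then obtain K where K: "\<forall>\<omega>'. (\<forall>i<K. \<omega>' i = \<omega> i) \<longrightarrow> \<omega>' \<in> S" using assms by blast
  define U where "U i = (if i < K then {\<omega> i} else UNIV)" for i
  have "finite {i \<in> UNIV. U i \<noteq> topspace (discrete_topology UNIV)}"
    by (rule finite_subset[of _ "{..<K}"]) (auto simp: U_def)
  moreover have "\<omega> \<in> Pi\<^sub>E UNIV U" by (auto simp: U_def PiE_UNIV_domain)
  moreover have "Pi\<^sub>E UNIV U \<subseteq> S" using K by (auto simp: U_def PiE_UNIV_domain Pi_def)
  ultimately show "\<exists>U. finite {i \<in> UNIV. U i \<noteq> topspace (discrete_topology UNIV)} \<and>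
      (\<forall>i\<in>UNIV. openin (discrete_topology UNIV) (U i)) \<and> \<omega> \<in> Pi\<^sub>E UNIV U \<and> Pi\<^sub>E UNIV U \<subseteq> S"
    by auto
qed

lemma continuous_map_cantor_space:
  fixes h :: "(nat \<Rightarrow> bool) \<Rightarrow> 'b::metric_space"
  assumes modulus: "\<And>e. e > 0 \<Longrightarrow> \<exists>K. \<forall>\<omega> \<omega>'. (\<forall>i<K. \<omega> i = \<omega>' i) \<longrightarrow> dist (h \<omega>) (h \<omega>') < e"
  shows "continuous_map cantor_space euclidean h"
  unfolding continuous_map
proof (intro conjI allI impI)
  show "h ` topspace cantor_space \<subseteq> topspace euclidean" by simp
  fix U :: "'b set" assume "openin euclidean U"
  show "openin cantor_space {x \<in> topspace cantor_space. h x \<in> U}"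
  proof (rule openin_cantor_space)
    fix \<omega> assume "\<omega> \<in> {x \<in> topspace cantor_space. h x \<in> U}"
    then obtain e where e: "e > 0" "ball (h \<omega>) e \<subseteq> U"
      using \<open>openin euclidean U\<close> open_contains_ball by force
    obtain K where "\<forall>\<omega>'. (\<forall>i<K. \<omega> i = \<omega>' i) \<longrightarrow> dist (h \<omega>) (h \<omega>') < e"
      using modulus[OF e(1)] by blast
    then show "\<exists>K. \<forall>\<omega>'. (\<forall>i<K. \<omega>' i = \<omega> i) \<longrightarrow> \<omega>' \<in> {x \<in> topspace cantor_space. h x \<in> U}"
      using e(2) topspace_cantor_space
      by (metis (mono_tags, lifting) UNIV_I mem_Collect_eq mem_ball subsetD)
  qed
qed

lemma compact_image_cylinder:
  fixes h :: "(nat \<Rightarrow> bool) \<Rightarrow> 'b::metric_space"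
  assumes h: "continuous_map cantor_space euclidean h"
  shows "compact (h ` {\<omega>. \<omega> i = b})"
proof -
  have "openin cantor_space (topspace cantor_space - {\<omega>. \<omega> i = b})"
    unfolding topspace_cantor_space by (rule openin_cantor_space) (intro exI[of _ "Suc i"], auto)
  then have "closedin cantor_space {\<omega>. \<omega> i = b}" unfolding closedin_def topspace_cantor_space by simp
  then have "compactin cantor_space {\<omega>. \<omega> i = b}"
    by (rule closedin_compact_space[OF compact_cantor_space])
  from image_compactin[OF this h] show ?thesis by simp
qed

text \<open>An injective continuous image of the Cantor space is totally disconnected: two of its
  points are separated by the disjoint closed images of two complementary cylinders.\<close>
lemma cantor_image_components:
  fixes h :: "(nat \<Rightarrow> bool) \<Rightarrow> 'b::metric_space"
  assumes inj: "inj h" and h: "continuous_map cantor_space euclidean h"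
  shows "connected_component_set (range h) (h \<omega>) \<subseteq> {h \<omega>}"
proof
  let ?C = "connected_component_set (range h) (h \<omega>)"
  fix y assume y: "y \<in> ?C"
  then obtain \<omega>y where \<omega>y: "y = h \<omega>y" using connected_component_subset by blast
  show "y \<in> {h \<omega>}"
  proof (rule ccontr)
    assume "y \<notin> {h \<omega>}"
    then have "\<omega> \<noteq> \<omega>y" using \<omega>y by blast
    then obtain i where i: "\<omega> i \<noteq> \<omega>y i" by blast
    define A where "A = h ` {\<omega>'. \<omega>' i = \<omega> i}"
    define B where "B = h ` {\<omega>'. \<omega>' i = (\<not> \<omega> i)}"
    have "closed A" "closed B"
      unfolding A_def B_def using compact_image_cylinder[OF h] compact_imp_closed by blast+
    moreover have "?C \<subseteq> A \<union> B" "A \<inter> B = {}"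
      using connected_component_subset inj unfolding A_def B_def by (fastforce dest: injD)+
    moreover have "h \<omega> \<in> A \<inter> ?C" "y \<in> B \<inter> ?C"
      using y i \<omega>y unfolding A_def B_def by auto
    ultimately show False using connected_closed[of ?C] connected_connected_component by blast
  qed
qed

text \<open>The injective image of the Cantor space under a uniformly continuous map is a Cantor
  set: it is compact, has no isolated points, and is split by the clopen images of the
  cylinders {\<omega> i = b}.\<close>
theorem cantor_set_image:
  fixes h :: "(nat \<Rightarrow> bool) \<Rightarrow> 'b::metric_space"
  assumes inj: "inj h"
    and modulus: "\<And>e. e > 0 \<Longrightarrow> \<exists>K. \<forall>\<omega> \<omega>'. (\<forall>i<K. \<omega> i = \<omega>' i) \<longrightarrow> dist (h \<omega>) (h \<omega>') < e"
  shows "cantor_set (range h)"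
proof -
  have h: "continuous_map cantor_space euclidean h" by (rule continuous_map_cantor_space[OF modulus])
  have "compactin cantor_space UNIV"
    using compact_cantor_space unfolding compact_space_def topspace_cantor_space .
  from image_compactin[OF this h] have "compact (range h)" by simp
  moreover have "h \<omega> islimpt range h" for \<omega>
    unfolding islimpt_approachable
  proof (intro allI impI)
    fix e :: real assume "0 < e"
    then obtain K where K: "\<forall>\<omega> \<omega>'. (\<forall>i<K. \<omega> i = \<omega>' i) \<longrightarrow> dist (h \<omega>) (h \<omega>') < e"
      using modulus by blast
    define \<omega>' where "\<omega>' = fun_upd \<omega> K (\<not> \<omega> K)"
    have "h \<omega>' \<noteq> h \<omega>" using inj unfolding \<omega>'_def by (metis fun_upd_same injD)
    moreover have "dist (h \<omega>') (h \<omega>) < e" using K unfolding \<omega>'_def by simp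
    ultimately show "\<exists>x'\<in>range h. x' \<noteq> h \<omega> \<and> dist x' (h \<omega>) < e" by blast
  qed
  moreover have "connected_component_set (range h) (h \<omega>) \<subseteq> {h \<omega>}" for \<omega>
    by (rule cantor_image_components[OF inj h])
  ultimately show ?thesis unfolding cantor_set_def by auto
qed

section \<open>The scrambled Mycielski set\<close>

locale scrambled_family = coded_factor +
  fixes MM :: "nat \<Rightarrow> nat" and DD :: "nat \<Rightarrow> 'a list" and qq :: "nat \<Rightarrow> int"
  assumes connector_DD: "connector (MM m) (DD m)"
    and connectors_dense: "y \<in> Y \<Longrightarrow> r > 0 \<Longrightarrow> \<exists>m. \<forall>c. dist (E (coded (qq m) (MM m) (DD m) c)) y < r"
begin

text \<open>The point with connector m, delay n and free bits \<omega>; delaying by n amounts to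
  moving the connector n blocks to the left.\<close>
definition family_point :: "nat \<Rightarrow> nat \<Rightarrow> (nat \<Rightarrow> bool) \<Rightarrow> 'b" where
  "family_point m n \<omega> = E (coded (qq m - int n) (MM m) (DD m) (sparse_code n (tagged m \<omega>)))"

definition family :: "'b set" where
  "family = (\<Union>m n. range (family_point m n))"

lemma family_point_pair:
  assumes "(m, n, \<omega>) \<noteq> (m', n', \<omega>')"
  defines "x \<equiv> family_point m n \<omega>" and "y \<equiv> family_point m' n' \<omega>'"
  shows "(x, y) \<in> SProx g - Asy g" and "ereal \<epsilon> \<le> limsup (\<lambda>t. ereal (dist ((g ^^ t) x) ((g ^^ t) y)))"
    and "x \<noteq> y"
proof -
  have "n \<noteq> n' \<or> tagged m \<omega> \<noteq> tagged m' \<omega>'" using assms(1) tagged_inj by blast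
  note pair = coded_pair_scrambled[OF connector_DD connector_DD tagged_0 tagged_0 this]
  show "(x, y) \<in> SProx g - Asy g" "ereal \<epsilon> \<le> limsup (\<lambda>t. ereal (dist ((g ^^ t) x) ((g ^^ t) y)))"
    "x \<noteq> y" unfolding x_def y_def family_point_def by (fact pair)+
qed

lemma family_subset: "family \<subseteq> Y"
  unfolding family_def family_point_def using E_in_Y coded_admissible[OF connector_DD] by auto

text \<open>g^p moves the connector one block to the left, i.e. increases the delay.\<close>
lemma family_invariant: "(g ^^ p) ` family \<subseteq> family"
proof clarify
  fix x assume "x \<in> family"
  then obtain m n \<omega> where x: "x = family_point m n \<omega>" unfolding family_def by blast
  let ?z = "coded (qq m - int n) (MM m) (DD m) (sparse_code n (tagged m \<omega>))"
  have "(g ^^ p) x = E (\<lambda>i. ?z (i + int 1 * int p))"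
    unfolding x family_point_def using E_shift[OF coded_admissible[OF connector_DD]] by simp
  also have "\<dots> = E (coded (qq m - int (Suc n)) (MM m) (DD m) (sparse_code (Suc n) (tagged m \<omega>)))"
    unfolding coded_shift sparse_code_shift by (simp add: algebra_simps)
  finally show "(g ^^ p) x \<in> family" unfolding family_def family_point_def by blast
qed

text \<open>For fixed m and n, the point depends uniformly continuously on the bits \<omega>: the
  central window of the coded sequence only sees finitely many of them.\<close>
lemma family_point_modulus:
  assumes e: "e > 0"
  shows "\<exists>K. \<forall>\<omega> \<omega>'. (\<forall>i<K. \<omega> i = \<omega>' i) \<longrightarrow> dist (family_point m n \<omega>) (family_point m n \<omega>') < e"
proof -
  obtain N where N: "\<forall>z z'. admissible z \<and> admissible z' \<and> (\<forall>i. \<bar>i\<bar> \<le> int N \<longrightarrow> z i = z' i)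
      \<longrightarrow> dist (E z) (E z') < e" using E_local[OF e] by blast
  show ?thesis
  proof (intro exI[of _ "N + n"] allI impI)
    fix \<omega> \<omega>' :: "nat \<Rightarrow> bool" assume "\<forall>i<N + n. \<omega> i = \<omega>' i"
    then have tag: "tagged m \<omega> i = tagged m \<omega>' i" if "i \<le> N + n" for i
      using tagged_agree that by blast
    have "coded (qq m - int n) (MM m) (DD m) (sparse_code n (tagged m \<omega>)) i =
          coded (qq m - int n) (MM m) (DD m) (sparse_code n (tagged m \<omega>')) i" if i: "\<bar>i\<bar> \<le> int N" for i
    proof -
      have "i div int p \<le> \<bar>i\<bar>"
      proof (cases "0 < i")
        case False
        then have "i div int p \<le> 0" using p_pos by (intro div_nonpos_pos_le0) auto
        then show ?thesis by linarith
      qed (simp add: int_div_le_self)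
      then have "sparse_code n (tagged m \<omega>) (i div int p) = sparse_code n (tagged m \<omega>') (i div int p)"
        using i by (intro sparse_code_agree[of "N + n"]) (use tag in auto)
      then show ?thesis unfolding coded_def Let_def by simp
    qed
    then show "dist (family_point m n \<omega>) (family_point m n \<omega>') < e"
      unfolding family_point_def using N coded_admissible[OF connector_DD] by blast
  qed
qed

lemma family_mycielski: "mycielski_set family"
  unfolding mycielski_set_def
proof (intro exI conjI)
  show "countable (range (\<lambda>(m, n). range (family_point m n)))" by simp
  show "family = \<Union> (range (\<lambda>(m, n). range (family_point m n)))" unfolding family_def by auto
  have "cantor_set (range (family_point m n))" for m n
  proof (rule cantor_set_image[OF injI family_point_modulus])
    show "\<omega> = \<omega>'" if "family_point m n \<omega> = family_point m n \<omega>'" for \<omega> \<omega>'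
      using family_point_pair(3)[of m n \<omega> m n \<omega>'] that by auto
  qed
  then show "\<forall>C\<in>range (\<lambda>(m, n). range (family_point m n)). cantor_set C" by auto
qed

text \<open>The family is dense: with delay 0, the connector m forces E close to any given point.\<close>
lemma family_dense: "Y \<subseteq> closure family"
proof
  fix y assume "y \<in> Y"
  show "y \<in> closure family" unfolding closure_approachable
  proof (intro allI impI)
    fix r :: real assume "r > 0"
    then obtain m where "dist (E (coded (qq m) (MM m) (DD m) c)) y < r" for c
      using connectors_dense[OF \<open>y \<in> Y\<close>] by blast
    then have "dist (family_point m 0 (\<lambda>_. True)) y < r" unfolding family_point_def by simp
    then show "\<exists>x\<in>family. dist x y < r" unfolding family_def by blast
  qed
qed

lemma family_scrambled: "synd_eps_scrambled g \<epsilon> family"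
  unfolding synd_eps_scrambled_def
proof (intro conjI ballI impI)
  have "family_point 0 0 (\<lambda>_. True) \<noteq> family_point 0 0 (\<lambda>_. False)"
    by (rule family_point_pair(3)) (metis prod.inject)
  then show "\<exists>x\<in>family. \<exists>y\<in>family. x \<noteq> y" unfolding family_def by blast
next
  fix x y assume "x \<in> family" "y \<in> family" "x \<noteq> y"
  then obtain m n \<omega> m' n' \<omega>' where "x = family_point m n \<omega>" "y = family_point m' n' \<omega>'"
    and "(m, n, \<omega>) \<noteq> (m', n', \<omega>')" unfolding family_def by blast
  then show "(x, y) \<in> SProx g - Asy g" "ereal \<epsilon> \<le> limsup (\<lambda>n. ereal (dist ((g ^^ n) x) ((g ^^ n) y)))"
    using family_point_pair(1,2) by blast+
qed

theorem scrambled_mycielski_set: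
  "\<exists>T. T \<subseteq> Y \<and> Y \<subseteq> closure T \<and> mycielski_set T \<and> (g ^^ p) ` T \<subseteq> T \<and> synd_eps_scrambled g \<epsilon> T"
  using family_subset family_dense family_mycielski family_invariant family_scrambled by blast

end

context block_code
begin

text \<open>If L is countable and E approximates every point of Y through some window, one
  connector per pair (word, position) gives a dense family of connectors.\<close>
lemma dense_connectors_exist:
  fixes E :: "(int \<Rightarrow> 'a) \<Rightarrow> 'b::metric_space"
  assumes L: "countable L"
    and approx: "\<And>e. e > 0 \<Longrightarrow> \<exists>N c. \<forall>y\<in>Y. \<exists>w\<in>L. length w = N \<and>
                   (\<forall>z. admissible z \<and> win z c N = w \<longrightarrow> dist (E z) y < e)"
  shows "\<exists>(MM :: nat \<Rightarrow> nat) DD qq. (\<forall>m. connector (MM m) (DD m)) \<and>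
           (\<forall>y\<in>Y. \<forall>r>0. \<exists>m. \<forall>c. dist (E (coded (qq m) (MM m) (DD m) c)) y < r)"
proof -
  define P where "P = L \<times> (UNIV :: int set)"
  have P: "countable P" "P \<noteq> {}" using L s_in_L unfolding P_def by blast+
  define en where "en = from_nat_into P"
  have "fst (en m) \<in> L" for m
    using from_nat_into[OF P(2), of m] unfolding en_def P_def mem_Times_iff ..
  then have "\<forall>m. \<exists>M D q i. connector M D \<and> occurs_at (fst (en m)) D i \<and> q * int p + int i = snd (en m)"
    using connector_exists[OF _ p_pos] unfolding connector_def by blast
  then obtain MM DD qq ii where conn: "\<And>m. connector (MM m) (DD m)"
    and occ: "\<And>m. occurs_at (fst (en m)) (DD m) (ii m)"
    and pos: "\<And>m. qq m * int p + int (ii m) = snd (en m)"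
    by metis
  have "\<exists>m. \<forall>c. dist (E (coded (qq m) (MM m) (DD m) c)) y < r" if "y \<in> Y" "r > 0" for y r
  proof -
    obtain N c where "\<forall>y\<in>Y. \<exists>w\<in>L. length w = N \<and>
        (\<forall>z. admissible z \<and> win z c N = w \<longrightarrow> dist (E z) y < r)"
      using approx[OF \<open>r > 0\<close>] by blast
    then obtain w where w: "w \<in> L" "length w = N"
      and close: "\<forall>z. admissible z \<and> win z c N = w \<longrightarrow> dist (E z) y < r"
      using \<open>y \<in> Y\<close> by blast
    obtain m where m: "en m = (w, c)" using from_nat_into_surj[OF P(1)] w(1) unfolding en_def P_def
      by blast
    have "win (coded (qq m) (MM m) (DD m) cc) c N = w" for cc
      using win_occurs_at[OF coded_window_connector[OF conn[of m], of "qq m" cc] occ[of m]] pos[of m] m w(2)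
      by simp
    then show ?thesis using close coded_admissible[OF conn] by blast
  qed
  then have dense: "\<forall>y\<in>Y. \<forall>r>0. \<exists>m. \<forall>c. dist (E (coded (qq m) (MM m) (DD m) c)) y < r" by blast
  show ?thesis
  proof (intro exI conjI)
    show "\<forall>m. connector (MM m) (DD m)" using conn by blast
  qed (rule dense)
qed

end

context sync_language
begin

lemma separating_markers:
  fixes E :: "(int \<Rightarrow> 'a) \<Rightarrow> 'b::metric_space"
  assumes approx: "\<And>e. e > 0 \<Longrightarrow> \<exists>N c. \<forall>y\<in>Y. \<exists>w\<in>L. length w = N \<and>
                   (\<forall>z. admissible z \<and> win z c N = w \<longrightarrow> dist (E z) y < e)"
    and two: "y1 \<in> Y" "y2 \<in> Y" "y1 \<noteq> y2"
  shows "\<exists>c0 u0 u1. u0 \<in> L \<and> u1 \<in> L \<and> length u0 = length u1 \<and>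
           (\<forall>z z'. admissible z \<and> admissible z' \<and> win z c0 (length u0) = u0 \<and>
              win z' c0 (length u1) = u1 \<longrightarrow> dist y1 y2 / 3 \<le> dist (E z) (E z'))"
proof -
  define \<epsilon> where "\<epsilon> = dist y1 y2 / 3"
  have eps: "\<epsilon> > 0" using two unfolding \<epsilon>_def by simp
  obtain N c0 where N: "\<forall>y\<in>Y. \<exists>w\<in>L. length w = N \<and>
      (\<forall>z. admissible z \<and> win z c0 N = w \<longrightarrow> dist (E z) y < \<epsilon>)" using approx[OF eps] by blast
  obtain u0 where u0: "u0 \<in> L" "length u0 = N" "\<forall>z. admissible z \<and> win z c0 N = u0 \<longrightarrow> dist (E z) y1 < \<epsilon>"
    using N two(1) by blast
  obtain u1 where u1: "u1 \<in> L" "length u1 = N" "\<forall>z. admissible z \<and> win z c0 N = u1 \<longrightarrow> dist (E z) y2 < \<epsilon>"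
    using N two(2) by blast
  have sep: "\<epsilon> \<le> dist (E z) (E z')"
    if "admissible z" "admissible z'" "win z c0 (length u0) = u0" "win z' c0 (length u1) = u1" for z z'
  proof -
    have "dist (E z) y1 < \<epsilon>" "dist (E z') y2 < \<epsilon>" using that u0 u1 by auto
    moreover have "dist y1 y2 \<le> dist (E z) y1 + dist (E z) (E z') + dist (E z') y2"
      using dist_triangle[of y1 y2 "E z"] dist_triangle[of "E z" y2 "E z'"] dist_commute[of y1 "E z"]
      by linarith
    ultimately show ?thesis unfolding \<epsilon>_def by linarith
  qed
  have "u0 \<in> L \<and> u1 \<in> L \<and> length u0 = length u1 \<and>
      (\<forall>z z'. admissible z \<and> admissible z' \<and> win z c0 (length u0) = u0 \<and>
         win z' c0 (length u1) = u1 \<longrightarrow> dist y1 y2 / 3 \<le> dist (E z) (E z'))"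
    using u0 u1 sep unfolding \<epsilon>_def by auto
  then show ?thesis by blast
qed

theorem scrambled_set_from_coding:
  fixes E :: "(int \<Rightarrow> 'a) \<Rightarrow> 'b::metric_space"
  assumes L: "countable L"
    and E_in_Y: "\<And>z. admissible z \<Longrightarrow> E z \<in> Y"
    and E_shift: "\<And>z t. admissible z \<Longrightarrow> E (\<lambda>i. z (i + int t)) = (g ^^ t) (E z)"
    and E_local: "\<And>\<eta>. \<eta> > 0 \<Longrightarrow> \<exists>N. \<forall>z z'. admissible z \<and> admissible z' \<and>
                    (\<forall>i. \<bar>i\<bar> \<le> int N \<longrightarrow> z i = z' i) \<longrightarrow> dist (E z) (E z') < \<eta>"
    and approx: "\<And>e. e > 0 \<Longrightarrow> \<exists>N c. \<forall>y\<in>Y. \<exists>w\<in>L. length w = N \<and>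
                   (\<forall>z. admissible z \<and> win z c N = w \<longrightarrow> dist (E z) y < e)"
    and two: "y1 \<in> Y" "y2 \<in> Y" "y1 \<noteq> y2"
  shows "\<exists>\<epsilon>>0. \<exists>k::nat. k > 0 \<and> (\<exists>T. T \<subseteq> Y \<and> Y \<subseteq> closure T \<and> mycielski_set T \<and>
           (g ^^ k) ` T \<subseteq> T \<and> synd_eps_scrambled g \<epsilon> T)"
proof -
  define \<epsilon> where "\<epsilon> = dist y1 y2 / 3"
  have eps: "\<epsilon> > 0" using two unfolding \<epsilon>_def by simp
  obtain c0 u0 u1 where u: "u0 \<in> L" "u1 \<in> L" "length u0 = length u1"
    and separates: "\<And>z z'. admissible z \<Longrightarrow> admissible z' \<Longrightarrow> win z c0 (length u0) = u0 \<Longrightarrow>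
                    win z' c0 (length u1) = u1 \<Longrightarrow> \<epsilon> \<le> dist (E z) (E z')"
    using separating_markers[OF approx two] unfolding \<epsilon>_def by blast
  obtain B0 B1 p off where blocks: "length s < p" "bordered p B0" "bordered p B1"
    "occurs_at u0 B0 off" "occurs_at u1 B1 off"
    using marker_blocks_exist[OF u(1,2)] by blast
  have code: "block_code L s B0 B1 p"
    by (intro block_code.intro sync_language_axioms block_code_axioms.intro) (use blocks in auto)
  interpret block_code L s B0 B1 p by (fact code)
  obtain MM :: "nat \<Rightarrow> nat" and DD qq where dense: "\<forall>m. connector (MM m) (DD m)"
    "\<forall>y\<in>Y. \<forall>r>0. \<exists>m. \<forall>c. dist (E (coded (qq m) (MM m) (DD m) c)) y < r"
    using dense_connectors_exist[OF L approx] by blast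
  interpret scrambled_family L s B0 B1 p E Y g \<epsilon> c0 u0 u1 off MM DD qq
    by (intro scrambled_family.intro coded_factor.intro code coded_factor_axioms.intro
        scrambled_family_axioms.intro)
       (use E_in_Y E_shift E_local eps separates blocks u dense in auto)
  show ?thesis using scrambled_mycielski_set eps p_pos by blast
qed

text \<open>Two distinct words of equal length give uncountably many admissible sequences, pairwise
  differing at some nonnegative position: code arbitrary bit sequences by the two blocks.\<close>
lemma admissible_cantor_family:
  assumes u0: "u0 \<in> L" and u1: "u1 \<in> L" and len: "length u0 = length u1" and ne: "u0 \<noteq> u1"
  shows "\<exists>\<Phi> :: (nat \<Rightarrow> bool) \<Rightarrow> int \<Rightarrow> 'a. (\<forall>\<omega>. admissible (\<Phi> \<omega>)) \<and>
           (\<forall>\<omega> \<omega>'. \<omega> \<noteq> \<omega>' \<longrightarrow> (\<exists>i\<ge>0. \<Phi> \<omega> i \<noteq> \<Phi> \<omega>' i))"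
proof -
  obtain B0 B1 p off where blocks: "length s < p" "bordered p B0" "bordered p B1"
    "occurs_at u0 B0 off" "occurs_at u1 B1 off"
    using marker_blocks_exist[OF u0 u1] by blast
  have "B0 \<noteq> B1"
  proof
    assume "B0 = B1"
    then have "take (length u0) (drop off B0) = take (length u1) (drop off B1)" using len by simp
    then show False using blocks(4,5) ne unfolding occurs_at_def by simp
  qed
  interpret block_code L s B0 B1 p
    by (intro block_code.intro sync_language_axioms block_code_axioms.intro) (use blocks in auto)
  define \<Phi> where "\<Phi> \<omega> = coded 0 1 B0 (\<lambda>j. \<omega> (nat (j - 1)))" for \<omega>
  have distinct: "\<exists>i\<ge>0. \<Phi> \<omega> i \<noteq> \<Phi> \<omega>' i" if "\<omega> \<noteq> \<omega>'" for \<omega> \<omega>'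
  proof -
    obtain k where k: "\<omega> k \<noteq> \<omega>' k" using \<open>\<omega> \<noteq> \<omega>'\<close> by blast
    define c where "c = (\<lambda>j. \<omega> (nat (j - 1)))"
    define c' where "c' = (\<lambda>j. \<omega>' (nat (j - 1)))"
    have "c (int k + 1) \<noteq> c' (int k + 1)" using k unfolding c_def c'_def by simp
    with coded_distinct[OF connector_B0, where q = 0 and j = "int k + 1" and c = c and c' = c']
    obtain r where "\<Phi> \<omega> ((int k + 1) * int p + int r) \<noteq> \<Phi> \<omega>' ((int k + 1) * int p + int r)"
      using \<open>B0 \<noteq> B1\<close> unfolding \<Phi>_def c_def c'_def by auto
    then show ?thesis by (intro exI[of _ "(int k + 1) * int p + int r"]) simp
  qed
  have "admissible (\<Phi> \<omega>)" for \<omega> unfolding \<Phi>_def by (rule coded_admissible[OF connector_B0])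
  with distinct show ?thesis by (intro exI[of _ \<Phi>]) blast
qed

end

text \<open>Cantor's diagonal argument: the bit sequences are uncountable.\<close>
lemma uncountable_bit_sequences: "\<not> countable (UNIV :: (nat \<Rightarrow> bool) set)"
proof
  assume "countable (UNIV :: (nat \<Rightarrow> bool) set)"
  then obtain n where "from_nat_into UNIV n = (\<lambda>i. \<not> from_nat_into (UNIV :: (nat \<Rightarrow> bool) set) i i)"
    by (metis from_nat_into_surj UNIV_I)
  from fun_cong[OF this, of n] show False by simp
qed

lemma topspace_shift_top [simp]: "topspace (shift_top :: ('i \<Rightarrow> 'a) topology) = UNIV"
  by (simp add: shift_top_def PiE_UNIV_domain)

lemma compact_shift_top: "compact_space (shift_top :: ('i \<Rightarrow> 'a::finite) topology)"
  unfolding shift_top_def by (simp add: compact_space_product_topology compact_space_discrete_topology)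

lemma openin_cylinder:
  assumes "finite F"
  shows "openin shift_top {x :: 'i \<Rightarrow> 'a. \<forall>i\<in>F. P i (x i)}"
  unfolding shift_top_def openin_product_topology_alt
proof (intro ballI)
  fix x :: "'i \<Rightarrow> 'a" assume x: "x \<in> {x. \<forall>i\<in>F. P i (x i)}"
  define V where "V i = (if i \<in> F then {a. P i a} else UNIV)" for i
  have "finite {i \<in> UNIV. V i \<noteq> topspace (discrete_topology UNIV)}"
    by (rule finite_subset[OF _ assms]) (auto simp: V_def)
  moreover have "x \<in> Pi\<^sub>E UNIV V" using x by (auto simp: V_def PiE_UNIV_domain)
  moreover have "Pi\<^sub>E UNIV V \<subseteq> {x. \<forall>i\<in>F. P i (x i)}" by (auto simp: V_def PiE_UNIV_domain Pi_def)
  ultimately show "\<exists>U. finite {i \<in> UNIV. U i \<noteq> topspace (discrete_topology UNIV)} \<and>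
       (\<forall>i\<in>UNIV. openin (discrete_topology UNIV) (U i)) \<and> x \<in> Pi\<^sub>E UNIV U \<and>
       Pi\<^sub>E UNIV U \<subseteq> {x. \<forall>i\<in>F. P i (x i)}"
    by auto
qed

lemma cylinder_in_open:
  assumes "openin (shift_top :: ('i \<Rightarrow> 'a) topology) U" "x \<in> U"
  shows "\<exists>F. finite F \<and> (\<forall>y. (\<forall>i\<in>F. y i = x i) \<longrightarrow> y \<in> U)"
proof -
  obtain V where V: "finite {i \<in> UNIV. V i \<noteq> topspace (discrete_topology UNIV)}"
    "x \<in> Pi\<^sub>E UNIV V" "Pi\<^sub>E UNIV V \<subseteq> U"
    using assms unfolding shift_top_def openin_product_topology_alt by blast
  define F where "F = {i \<in> UNIV. V i \<noteq> topspace (discrete_topology (UNIV :: 'a set))}"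
  have "y \<in> U" if "\<forall>i\<in>F. y i = x i" for y
  proof -
    have "y i \<in> V i" for i
      using that V(2) by (cases "i \<in> F") (auto simp: F_def PiE_UNIV_domain)
    then show ?thesis using V(3) by (auto simp: PiE_UNIV_domain)
  qed
  then show ?thesis using V(1) unfolding F_def by blast
qed

lemma closedin_approximable:
  fixes X :: "('i \<Rightarrow> 'a) set"
  assumes closed: "closedin shift_top X" and approx: "\<And>F. finite F \<Longrightarrow> \<exists>y\<in>X. \<forall>i\<in>F. y i = x i"
  shows "x \<in> X"
proof -
  have "x \<in> shift_top closure_of X" unfolding in_closure_of
  proof (intro conjI allI impI)
    fix U assume "x \<in> U \<and> openin shift_top U"
    then obtain F where "finite F" "\<forall>y. (\<forall>i\<in>F. y i = x i) \<longrightarrow> y \<in> U"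
      using cylinder_in_open by blast
    then show "\<exists>y. y \<in> X \<and> y \<in> U" using approx by blast
  qed simp
  then show ?thesis using closure_of_closedin[OF closed] by simp
qed

lemma continuous_on_subshift_cylinder:
  fixes X :: "('i \<Rightarrow> 'a) set" and \<pi> :: "('i \<Rightarrow> 'a) \<Rightarrow> 'b::metric_space"
  assumes c: "continuous_map (subtopology shift_top X) (top_of_set Y) \<pi>"
    and x: "x \<in> X" and e: "e > 0"
  shows "\<exists>F. finite F \<and> (\<forall>y\<in>X. (\<forall>i\<in>F. y i = x i) \<longrightarrow> dist (\<pi> y) (\<pi> x) < e)"
proof -
  have "openin (top_of_set Y) (Y \<inter> ball (\<pi> x) e)" by (rule openin_open_Int) simp
  from openin_continuous_map_preimage[OF c this]
  have "openin (subtopology shift_top X) {y \<in> X. \<pi> y \<in> Y \<inter> ball (\<pi> x) e}" by simp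
  then obtain Ob where Ob: "openin shift_top Ob" "{y \<in> X. \<pi> y \<in> Y \<inter> ball (\<pi> x) e} = Ob \<inter> X"
    unfolding openin_subtopology by blast
  have "\<pi> x \<in> Y" using continuous_map_image_subset_topspace[OF c] x by auto
  then have "x \<in> {y \<in> X. \<pi> y \<in> Y \<inter> ball (\<pi> x) e}" using x e by simp
  then have "x \<in> Ob" using Ob(2) by blast
  then obtain F where F: "finite F" "\<forall>y. (\<forall>i\<in>F. y i = x i) \<longrightarrow> y \<in> Ob"
    using cylinder_in_open[OF Ob(1)] by blast
  have "dist (\<pi> y) (\<pi> x) < e" if "y \<in> X" "\<forall>i\<in>F. y i = x i" for y
  proof -
    have "y \<in> Ob \<inter> X" using F that by blast
    then have "y \<in> {y \<in> X. \<pi> y \<in> Y \<inter> ball (\<pi> x) e}" using Ob(2) by blast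
    then show ?thesis by (simp add: dist_commute)
  qed
  then show ?thesis using F(1) by blast
qed

text \<open>A continuous map on a closed subshift is uniformly continuous: points agreeing on a
  suitable finite set of coordinates have images closer than e.  (Cover X by finitely many
  cylinders on which \<pi> varies by less than e / 2.)\<close>
lemma uniformly_continuous_on_subshift:
  fixes X :: "('i \<Rightarrow> 'a::finite) set" and \<pi> :: "('i \<Rightarrow> 'a) \<Rightarrow> 'b::metric_space"
  assumes cl: "closedin shift_top X"
    and c: "continuous_map (subtopology shift_top X) (top_of_set Y) \<pi>"
    and e: "e > 0"
  shows "\<exists>F. finite F \<and> (\<forall>x\<in>X. \<forall>y\<in>X. (\<forall>i\<in>F. x i = y i) \<longrightarrow> dist (\<pi> x) (\<pi> y) < e)"
proof -
  have "\<forall>x\<in>X. \<exists>F. finite F \<and> (\<forall>y\<in>X. (\<forall>i\<in>F. y i = x i) \<longrightarrow> dist (\<pi> y) (\<pi> x) < e / 2)"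
    using continuous_on_subshift_cylinder[OF c _ half_gt_zero[OF e]] by blast
  from bchoice[OF this] obtain Fx where Fx: "\<forall>x\<in>X. finite (Fx x) \<and>
      (\<forall>y\<in>X. (\<forall>i\<in>Fx x. y i = x i) \<longrightarrow> dist (\<pi> y) (\<pi> x) < e / 2)"
    by blast
  define C where "C x = {y. \<forall>i\<in>Fx x. y i = x i}" for x
  have cpt: "compactin shift_top X" by (rule closedin_compact_space[OF compact_shift_top cl])
  have op: "\<forall>U\<in>C ` X. openin shift_top U"
  proof
    fix U assume "U \<in> C ` X"
    then obtain x where "x \<in> X" "U = C x" by blast
    then show "openin shift_top U"
      unfolding C_def using Fx openin_cylinder[of "Fx x" "\<lambda>i a. a = x i"] by simp
  qed
  have cov: "X \<subseteq> \<Union> (C ` X)" unfolding C_def by blast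
  have cc: "\<forall>\<U>. (\<forall>U\<in>\<U>. openin shift_top U) \<and> X \<subseteq> \<Union>\<U> \<longrightarrow>
      (\<exists>\<F>. finite \<F> \<and> \<F> \<subseteq> \<U> \<and> X \<subseteq> \<Union>\<F>)"
    using cpt unfolding compactin_def by blast
  obtain \<F> where \<F>: "finite \<F>" "\<F> \<subseteq> C ` X" "X \<subseteq> \<Union>\<F>"
    using cc[rule_format, OF conjI[OF op cov]] by blast
  obtain G where G: "G \<subseteq> X" "finite G" "\<F> = C ` G" using finite_subset_image[OF \<F>(1,2)] by blast
  define F where "F = \<Union> (Fx ` G)"
  have fF: "finite F" unfolding F_def using G Fx by blast
  have "dist (\<pi> x) (\<pi> y) < e" if xy: "x \<in> X" "y \<in> X" "\<forall>i\<in>F. x i = y i" for x y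
  proof -
    obtain x0 where x0: "x0 \<in> G" "x \<in> C x0" using \<F>(3) G(3) xy(1) by blast
    have x0X: "x0 \<in> X" using x0 G by blast
    have sub: "Fx x0 \<subseteq> F" unfolding F_def using x0 by blast
    have xa: "\<forall>i\<in>Fx x0. x i = x0 i" using x0 unfolding C_def by blast
    then have ya: "\<forall>i\<in>Fx x0. y i = x0 i" using xy(3) sub by (metis subsetD)
    have "dist (\<pi> x) (\<pi> x0) < e / 2" using Fx x0X xy(1) xa by blast
    moreover have "dist (\<pi> y) (\<pi> x0) < e / 2" using Fx x0X xy(2) ya by blast
    ultimately show ?thesis using dist_triangle2[of "\<pi> x" "\<pi> y" "\<pi> x0"] by linarith
  qed
  then show ?thesis using fF by blast
qed

lemma shift_power: "(shift ^^ n) x = (\<lambda>i. x (i + of_nat n))"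
  by (induction n) (simp_all add: shift_def algebra_simps)

lemma factor_map_power:
  assumes "factor_map X Y g \<pi>" and "\<And>x. x \<in> X \<Longrightarrow> shift x \<in> X" and "x \<in> X"
  shows "(shift ^^ t) x \<in> X \<and> \<pi> ((shift ^^ t) x) = (g ^^ t) (\<pi> x)"
  by (induction t) (use assms in \<open>simp_all add: factor_map_def\<close>)

lemma language_factorial:
  assumes "w \<in> language X"
  shows "drop i (take j w) \<in> language X"
proof -
  obtain x a n where x: "x \<in> X" and w: "w = map (\<lambda>j. x (a + of_nat j)) [0..<n]"
    using assms unfolding language_def by blast
  have "drop i (take j w) = map (\<lambda>k. x ((a + of_nat i) + of_nat k)) [0..<min j n - i]"
  proof (rule nth_equalityI)
    fix k assume "k < length (drop i (take j w))"
    then have "k < min j n - i" "i + k < min j n" unfolding w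
      by (simp_all add: min_def split: if_splits)
    then show "drop i (take j w) ! k = map (\<lambda>k. x ((a + of_nat i) + of_nat k)) [0..<min j n - i] ! k"
      unfolding w by (simp add: algebra_simps)
  qed (simp add: w)
  then show ?thesis unfolding language_def using x by blast
qed

lemma openin_initial_cylinder:
  "openin shift_top {x :: 'i::comm_semiring_1 \<Rightarrow> 'a. \<forall>j<length w. x (of_nat j) = w ! j}"
proof -
  have eq: "{x :: 'i \<Rightarrow> 'a. \<forall>j<length w. x (of_nat j) = w ! j} =
      {x. \<forall>i\<in>of_nat ` {..<length w}. \<forall>j<length w. i = of_nat j \<longrightarrow> x i = w ! j}"
    by auto
  show ?thesis unfolding eq by (rule openin_cylinder) simp
qed

text \<open>Mixing of the subshift, applied to the cylinders of points beginning with u and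
  with v, gives words of the language starting with u and having v at any large position.\<close>
lemma language_mixing:
  fixes X :: "('i::comm_semiring_1 \<Rightarrow> 'a::finite) set"
  assumes translates: "\<And>x i. x \<in> X \<Longrightarrow> (\<lambda>j. x (i + j)) \<in> X"
    and mixing: "mixing_sys shift_top X shift"
    and u: "u \<in> language X" and v: "v \<in> language X"
  shows "\<exists>N. \<forall>n\<ge>N. \<exists>W\<in>language X. length W = n + length v \<and> take (length u) W = u \<and> drop n W = v"
proof -
  define cyl where "cyl w = {x \<in> X. \<forall>j<length w. x (of_nat j) = w ! j}" for w
  have open_cyl: "openin (subtopology shift_top X) (cyl w)" for w
    unfolding cyl_def openin_subtopology using openin_initial_cylinder by blast
  have cyl_ne: "cyl w \<noteq> {}" if w: "w \<in> language X" for w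
  proof -
    obtain x a n where "x \<in> X" "w = map (\<lambda>j. x (a + of_nat j)) [0..<n]"
      using w unfolding language_def by blast
    then have "(\<lambda>j. x (a + j)) \<in> cyl w" using translates unfolding cyl_def by auto
    then show ?thesis by blast
  qed
  have "finite {n. (shift ^^ n) ` cyl u \<inter> cyl v = {}}"
    using mixing open_cyl cyl_ne[OF u] cyl_ne[OF v] unfolding mixing_sys_def by blast
  then obtain N0 where "\<forall>n\<in>{n. (shift ^^ n) ` cyl u \<inter> cyl v = {}}. n < N0"
    using finite_nat_set_iff_bounded by blast
  then have N0: "\<forall>n\<ge>N0. (shift ^^ n) ` cyl u \<inter> cyl v \<noteq> {}" by force
  show ?thesis
  proof (intro exI[of _ "max N0 (length u)"] allI impI)
    fix n assume n: "max N0 (length u) \<le> n"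
    then obtain x where x: "x \<in> cyl u" "(shift ^^ n) x \<in> cyl v" using N0 by fastforce
    define W where "W = map (\<lambda>j. x (0 + of_nat j)) [0..<n + length v]"
    have "W \<in> language X" using x(1) unfolding W_def language_def cyl_def by blast
    moreover have "take (length u) W = u"
      using x(1) n unfolding W_def cyl_def by (intro nth_equalityI) auto
    moreover have "drop n W = v"
      using x(2) unfolding W_def cyl_def shift_power by (intro nth_equalityI) (auto simp: add.commute)
    moreover have "length W = n + length v" unfolding W_def by simp
    ultimately show "\<exists>W\<in>language X. length W = n + length v \<and> take (length u) W = u \<and> drop n W = v"
      by blast
  qed
qed

lemma sync_language_of_subshift:
  fixes X :: "('i::comm_semiring_1 \<Rightarrow> 'a::finite) set"
  assumes translates: "\<And>x i. x \<in> X \<Longrightarrow> (\<lambda>j. x (i + j)) \<in> X"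
    and mixing: "mixing_sys shift_top X shift" and sync: "synchronizing_word X s"
  shows "sync_language (language X) s"
proof
  show "u @ s @ v \<in> language X" if "u @ s \<in> language X" "s @ v \<in> language X" for u v
    using sync that unfolding synchronizing_word_def by blast
  show "s \<in> language X" using sync unfolding synchronizing_word_def by blast
qed (use language_factorial language_mixing[OF translates mixing] in blast)+


section \<open>Factors of mixing synchronizing subshifts\<close>

text \<open>The index embedding \<iota> into int lets admissible bi-infinite sequences z be read
  as sequences point z indexed by 'i; the conditions on \<iota> say that it is compatible with
  translation, covers the natural numbers, and that every finite set of indices lies in a
  window a, a + 1, ..., a + n - 1 from which all indices are reachable by translation.\<close>
locale subshift_factor =
  fixes X :: "('i::comm_semiring_1 \<Rightarrow> 'a::finite) set" and Y :: "'b::metric_space set"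
    and g :: "'b \<Rightarrow> 'b" and \<pi> :: "('i \<Rightarrow> 'a) \<Rightarrow> 'b" and \<iota> :: "'i \<Rightarrow> int" and s :: "'a list"
  assumes closed: "closedin shift_top X"
    and translates: "\<And>x i. x \<in> X \<Longrightarrow> (\<lambda>j. x (i + j)) \<in> X"
    and infinite_X: "infinite X"
    and mixing: "mixing_sys shift_top X shift"
    and sync_word: "synchronizing_word X s"
    and factor: "factor_map X Y g \<pi>"
    and countable_fibres: "\<And>y. y \<in> Y \<Longrightarrow> countable {x\<in>X. \<pi> x = y}"
    and index_shift: "\<And>i t. \<iota> (i + of_nat t) = \<iota> i + int t"
    and index_onto_nat: "\<And>n. \<exists>i. \<iota> i = int n"
    and index_windows: "\<And>F. finite F \<Longrightarrow>
      \<exists>(a :: 'i) n. (\<forall>i\<in>F. \<exists>j<n. i = a + of_nat j) \<and> (\<forall>b. \<exists>d. b = d + a)"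
begin

sublocale sync_language "language X" s
  by (rule sync_language_of_subshift[OF translates mixing sync_word])

lemma continuous_\<pi>: "continuous_map (subtopology shift_top X) (top_of_set Y) \<pi>"
  and \<pi>_onto: "\<pi> ` X = Y"
  using factor unfolding factor_map_def by blast+

definition point :: "(int \<Rightarrow> 'a) \<Rightarrow> 'i \<Rightarrow> 'a" where
  "point z = (\<lambda>i. z (\<iota> i))"

lemma shift_in_X: "x \<in> X \<Longrightarrow> shift x \<in> X"
  using translates[of x 1] unfolding shift_def by (simp add: add.commute)

lemma point_shift: "point (\<lambda>i. z (i + int t)) = (shift ^^ t) (point z)"
  unfolding point_def shift_power index_shift by simp

text \<open>Every admissible sequence gives a point of X: X is closed, and each finite part of
  point z is read off a window of z, which occurs in some point of X.\<close>
lemma point_in_X: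
  assumes adm: "admissible z"
  shows "point z \<in> X"
proof (rule closedin_approximable[OF closed])
  fix F :: "'i set" assume "finite F"
  then obtain a n where F: "\<forall>i\<in>F. \<exists>j<n. i = a + of_nat j" and reach: "\<forall>b. \<exists>d. b = d + a"
    using index_windows by blast
  have "win z (\<iota> a) n \<in> language X" using adm unfolding admissible_def by blast
  then obtain x b m where x: "x \<in> X" "win z (\<iota> a) n = map (\<lambda>j. x (b + of_nat j)) [0..<m]"
    unfolding language_def by blast
  from reach obtain d where d: "b = d + a" by (elim allE exE)
  have "m = n" using arg_cong[OF x(2), of length] by simp
  have "x (d + i) = point z i" if "i \<in> F" for i
  proof -
    from F that obtain j where j: "j < n" "i = a + of_nat j" by (elim ballE exE conjE) auto
    have "z (\<iota> a + int j) = win z (\<iota> a) n ! j" using j(1) by simp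
    also have "\<dots> = x (b + of_nat j)" using x(2) j(1) \<open>m = n\<close> by simp
    finally show ?thesis unfolding point_def j(2) index_shift d by (simp add: add.assoc)
  qed
  then show "\<exists>y\<in>X. \<forall>i\<in>F. y i = point z i"
    by (intro bexI[of _ "\<lambda>k. x (d + k)"] ballI) (simp_all add: translates[OF x(1)])
qed

definition coding :: "(int \<Rightarrow> 'a) \<Rightarrow> 'b" where
  "coding z = \<pi> (point z)"

lemma coding_in_Y: "admissible z \<Longrightarrow> coding z \<in> Y"
  using point_in_X \<pi>_onto unfolding coding_def by blast

lemma coding_shift: "admissible z \<Longrightarrow> coding (\<lambda>i. z (i + int t)) = (g ^^ t) (coding z)"
  unfolding coding_def point_shift using factor_map_power[OF factor shift_in_X point_in_X] by blast

text \<open>By uniform continuity of \<pi>, the coding depends uniformly on a central window.\<close>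
lemma coding_local:
  assumes "\<eta> > 0"
  shows "\<exists>N. \<forall>z z'. admissible z \<and> admissible z' \<and> (\<forall>i. \<bar>i\<bar> \<le> int N \<longrightarrow> z i = z' i)
           \<longrightarrow> dist (coding z) (coding z') < \<eta>"
proof -
  obtain F where F: "finite F" "\<forall>x\<in>X. \<forall>y\<in>X. (\<forall>i\<in>F. x i = y i) \<longrightarrow> dist (\<pi> x) (\<pi> y) < \<eta>"
    using uniformly_continuous_on_subshift[OF closed continuous_\<pi> assms] by blast
  have "finite ((\<lambda>i. nat \<bar>\<iota> i\<bar>) ` F)" using F(1) by simp
  then obtain N where "\<forall>k\<in>(\<lambda>i. nat \<bar>\<iota> i\<bar>) ` F. k \<le> N"
    using finite_nat_set_iff_bounded_le by blast
  then have N: "\<bar>\<iota> i\<bar> \<le> int N" if "i \<in> F" for i using that by fastforce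
  have "dist (coding z) (coding z') < \<eta>"
    if "admissible z" "admissible z'" "\<forall>i. \<bar>i\<bar> \<le> int N \<longrightarrow> z i = z' i" for z z'
  proof -
    have "\<forall>i\<in>F. point z i = point z' i" using that(3) N unfolding point_def by blast
    then show ?thesis using F(2) point_in_X that(1,2) unfolding coding_def by blast
  qed
  then show ?thesis by blast
qed

lemma coding_approx:
  assumes "e > 0"
  shows "\<exists>N c. \<forall>y\<in>Y. \<exists>w\<in>language X. length w = N \<and>
           (\<forall>z. admissible z \<and> win z c N = w \<longrightarrow> dist (coding z) y < e)"
proof -
  obtain F where F: "finite F" "\<forall>x\<in>X. \<forall>y\<in>X. (\<forall>i\<in>F. x i = y i) \<longrightarrow> dist (\<pi> x) (\<pi> y) < e"
    using uniformly_continuous_on_subshift[OF closed continuous_\<pi> assms] by blast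
  obtain a n where win: "\<forall>i\<in>F. \<exists>j<n. i = a + of_nat j" using index_windows[OF F(1)] by blast
  have "\<exists>w\<in>language X. length w = n \<and> (\<forall>z. admissible z \<and> win z (\<iota> a) n = w \<longrightarrow> dist (coding z) y < e)"
    if "y \<in> Y" for y
  proof -
    obtain x where x: "x \<in> X" "\<pi> x = y" using \<open>y \<in> Y\<close> \<pi>_onto by blast
    define w where "w = map (\<lambda>j. x (a + of_nat j)) [0..<n]"
    have "dist (coding z) y < e" if adm: "admissible z" and z: "win z (\<iota> a) n = w" for z
    proof -
      have "point z i = x i" if "i \<in> F" for i
      proof -
        obtain j where j: "j < n" "i = a + of_nat j" using win \<open>i \<in> F\<close> by blast
        then have "z (\<iota> a + int j) = x (a + of_nat j)" using arg_cong[OF z, of "\<lambda>w. w ! j"]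
          by (simp add: w_def)
        then show ?thesis unfolding point_def j(2) index_shift .
      qed
      then have "dist (\<pi> (point z)) (\<pi> x) < e" using F(2) point_in_X[OF adm] x(1) by blast
      then show ?thesis unfolding coding_def x(2) .
    qed
    moreover have "w \<in> language X" using x(1) unfolding w_def language_def by blast
    moreover have "length w = n" unfolding w_def by simp
    ultimately show ?thesis by blast
  qed
  then show ?thesis by blast
qed

text \<open>Y has two points: otherwise the uncountably many distinct points of X obtained from
  admissible_cantor_family would all lie in one countable fibre.\<close>
lemma two_points: "\<exists>y1\<in>Y. \<exists>y2\<in>Y. y1 \<noteq> y2"
proof -
  obtain x1 x2 where x: "x1 \<in> X" "x2 \<in> X" "x1 \<noteq> x2"
    using infinite_X by (metis finite.emptyI finite_insert finite_subset insertI1 subsetI)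
  then obtain i0 where i0: "x1 i0 \<noteq> x2 i0" by blast
  obtain a n j where j: "j < n" "i0 = a + of_nat j" using index_windows[of "{i0}"] by auto
  define u0 where "u0 = map (\<lambda>j. x1 (a + of_nat j)) [0..<n]"
  define u1 where "u1 = map (\<lambda>j. x2 (a + of_nat j)) [0..<n]"
  have "u0 \<in> language X" "u1 \<in> language X" using x unfolding u0_def u1_def language_def by blast+
  moreover have "u0 \<noteq> u1" using arg_cong[of u0 u1 "\<lambda>w. w ! j"] i0 j unfolding u0_def u1_def by auto
  ultimately obtain \<Phi> :: "(nat \<Rightarrow> bool) \<Rightarrow> int \<Rightarrow> 'a" where
    \<Phi>: "\<And>\<omega>. admissible (\<Phi> \<omega>)" "\<And>\<omega> \<omega>'. \<omega> \<noteq> \<omega>' \<Longrightarrow> \<exists>i\<ge>0. \<Phi> \<omega> i \<noteq> \<Phi> \<omega>' i"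
    using admissible_cantor_family[of u0 u1] unfolding u0_def u1_def by auto
  have inj: "inj (\<lambda>\<omega>. point (\<Phi> \<omega>))"
  proof (rule injI)
    fix \<omega> \<omega>' assume eq: "point (\<Phi> \<omega>) = point (\<Phi> \<omega>')"
    show "\<omega> = \<omega>'"
    proof (rule ccontr)
      assume "\<omega> \<noteq> \<omega>'"
      then obtain i where "i \<ge> 0" "\<Phi> \<omega> i \<noteq> \<Phi> \<omega>' i" using \<Phi>(2) by blast
      moreover obtain i' where "\<iota> i' = i" using index_onto_nat[of "nat i"] \<open>i \<ge> 0\<close> by auto
      ultimately show False using fun_cong[OF eq, of i'] unfolding point_def by simp
    qed
  qed
  show ?thesis
  proof (rule ccontr)
    assume "\<not> ?thesis"
    then have "coding (\<Phi> \<omega>) = coding (\<Phi> (\<lambda>_. True))" for \<omega> using coding_in_Y \<Phi>(1) by blast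
    then have "range (\<lambda>\<omega>. point (\<Phi> \<omega>)) \<subseteq> {x\<in>X. \<pi> x = coding (\<Phi> (\<lambda>_. True))}"
      using point_in_X \<Phi>(1) unfolding coding_def by auto
    then have "countable (range (\<lambda>\<omega>. point (\<Phi> \<omega>)))"
      using countable_fibres[OF coding_in_Y[OF \<Phi>(1)]] countable_subset by blast
    then show False using uncountable_bit_sequences countable_image_inj_on[OF _ inj] by blast
  qed
qed

theorem scrambled_set:
  "\<exists>\<epsilon>>0. \<exists>k::nat. k > 0 \<and> (\<exists>T. T \<subseteq> Y \<and> Y \<subseteq> closure T \<and> mycielski_set T \<and>
      (g ^^ k) ` T \<subseteq> T \<and> synd_eps_scrambled g \<epsilon> T)"
proof -
  have "countable (language X)" by (rule countable_subset[OF subset_UNIV]) simp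
  moreover obtain y1 y2 where "y1 \<in> Y" "y2 \<in> Y" "y1 \<noteq> y2" using two_points by blast
  ultimately show ?thesis
    using scrambled_set_from_coding[OF _ coding_in_Y coding_shift coding_local coding_approx] by blast
qed

end

lemma shift_power_in:
  assumes "shift ` X \<subseteq> X" "x \<in> X"
  shows "(shift ^^ n) x \<in> X"
  using assms by (induction n) auto

lemma one_sided_subshift_factor:
  fixes X :: "(nat \<Rightarrow> 'a::finite) set"
  assumes X: "one_sided_subshift X" "infinite X" "mixing_sys shift_top X shift"
    and s: "synchronizing_word X s"
    and \<pi>: "factor_map X Y g \<pi>" "\<forall>y\<in>Y. countable {x\<in>X. \<pi> x = y}"
  shows "subshift_factor X Y g \<pi> int s"
proof (unfold_locales)
  show "(\<lambda>j. x (i + j)) \<in> X" if "x \<in> X" for x i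
    using shift_power_in[OF _ that, of i] X(1) unfolding one_sided_subshift_def shift_power
    by (simp add: add.commute)
  show "\<exists>(a :: nat) n. (\<forall>i\<in>F. \<exists>j<n. i = a + of_nat j) \<and> (\<forall>b. \<exists>d. b = d + a)" if "finite F" for F
  proof -
    obtain n where "\<forall>i\<in>F. i < n" using \<open>finite F\<close> finite_nat_set_iff_bounded by blast
    then show ?thesis by (intro exI[of _ 0] exI[of _ n]) auto
  qed
qed (use X s \<pi> in \<open>auto simp: one_sided_subshift_def\<close>)

lemma two_sided_translate_back:
  assumes "shift ` X = X" "x \<in> X"
  shows "(\<lambda>j. x (j - int m)) \<in> X"
proof (induction m)
  case (Suc m)
  then obtain y where y: "y \<in> X" "shift y = (\<lambda>j. x (j - int m))" using assms(1) by (metis imageE)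
  have "y = (\<lambda>j. x (j - int (Suc m)))"
  proof
    fix j show "y j = x (j - int (Suc m))"
      using fun_cong[OF y(2), of "j - 1"] unfolding shift_def by (simp add: algebra_simps)
  qed
  then show ?case using y(1) by simp
qed (use assms in simp)

lemma two_sided_subshift_factor:
  fixes X :: "(int \<Rightarrow> 'a::finite) set"
  assumes X: "two_sided_subshift X" "infinite X" "mixing_sys shift_top X shift"
    and s: "synchronizing_word X s"
    and \<pi>: "factor_map X Y g \<pi>" "\<forall>y\<in>Y. countable {x\<in>X. \<pi> x = y}"
  shows "subshift_factor X Y g \<pi> id s"
proof (unfold_locales)
  have shift_X: "shift ` X = X" using X(1) by (simp add: two_sided_subshift_def)
  show "(\<lambda>j. x (i + j)) \<in> X" if "x \<in> X" for x i
  proof (cases "0 \<le> i")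
    case True
    then show ?thesis using shift_power_in[of X x "nat i"] shift_X that
      unfolding shift_power by (simp add: add.commute)
  next
    case False
    then show ?thesis using two_sided_translate_back[OF shift_X that, of "nat (- i)"]
      by (simp add: add.commute)
  qed
  show "\<exists>(a :: int) n. (\<forall>i\<in>F. \<exists>j<n. i = a + of_nat j) \<and> (\<forall>b. \<exists>d. b = d + a)" if "finite F" for F
  proof -
    obtain N where N: "\<forall>k\<in>(\<lambda>i. nat \<bar>i\<bar>) ` F. k \<le> N"
      using \<open>finite F\<close> finite_nat_set_iff_bounded_le by blast
    have "\<exists>j<2 * N + 1. i = - int N + int j" if "i \<in> F" for i
      using N that by (intro exI[of _ "nat (i + int N)"]) fastforce
    moreover have "\<exists>d. b = d + - int N" for b by (intro exI[of _ "b + int N"]) simp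
    ultimately show ?thesis by (intro exI[of _ "- int N"] exI[of _ "2 * N + 1"]) auto
  qed
qed (use X s \<pi> in \<open>auto simp: two_sided_subshift_def\<close>)

text \<open>Both cases are instances of subshift_factor.scrambled_set.\<close>
theorem theorem4p11:
  fixes Y :: "'b::metric_space set" and g :: "'b \<Rightarrow> 'b"
  assumes "compact Y" and "continuous_on Y g" and "g ` Y \<subseteq> Y"
  shows
   "(\<forall>(X :: (nat \<Rightarrow> 'a::finite) set) \<pi>.
       one_sided_subshift X \<and> infinite X \<and> mixing_sys shift_top X shift \<and> synchronizing_subshift X \<and>
       factor_map X Y g \<pi> \<and> (\<forall>y\<in>Y. countable {x\<in>X. \<pi> x = y})
       \<longrightarrow> (\<exists>\<epsilon>>0. \<exists>k::nat. k > 0 \<and> (\<exists>T. T \<subseteq> Y \<and> Y \<subseteq> closure T \<and> mycielski_set T \<and>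
              (g ^^ k) ` T \<subseteq> T \<and> synd_eps_scrambled g \<epsilon> T)))
    \<and>
    (\<forall>(X :: (int \<Rightarrow> 'a::finite) set) \<pi>.
       two_sided_subshift X \<and> infinite X \<and> mixing_sys shift_top X shift \<and> synchronizing_subshift X \<and>
       factor_map X Y g \<pi> \<and> (\<forall>y\<in>Y. countable {x\<in>X. \<pi> x = y})
       \<longrightarrow> (\<exists>\<epsilon>>0. \<exists>k::nat. k > 0 \<and> (\<exists>T. T \<subseteq> Y \<and> Y \<subseteq> closure T \<and> mycielski_set T \<and>
              (g ^^ k) ` T \<subseteq> T \<and> synd_eps_scrambled g \<epsilon> T)))"
proof (intro conjI allI impI; elim conjE)
  fix X :: "(nat \<Rightarrow> 'a) set" and \<pi> :: "(nat \<Rightarrow> 'a) \<Rightarrow> 'b"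
  assume X: "one_sided_subshift X" "infinite X" "mixing_sys shift_top X shift"
    and sync: "synchronizing_subshift X" and \<pi>: "factor_map X Y g \<pi>" "\<forall>y\<in>Y. countable {x\<in>X. \<pi> x = y}"
  obtain s where "synchronizing_word X s" using sync unfolding synchronizing_subshift_def by blast
  from one_sided_subshift_factor[OF X this \<pi>]
  show "\<exists>\<epsilon>>0. \<exists>k::nat. k > 0 \<and> (\<exists>T. T \<subseteq> Y \<and> Y \<subseteq> closure T \<and> mycielski_set T \<and>
      (g ^^ k) ` T \<subseteq> T \<and> synd_eps_scrambled g \<epsilon> T)"
    by (rule subshift_factor.scrambled_set)
next
  fix X :: "(int \<Rightarrow> 'a) set" and \<pi> :: "(int \<Rightarrow> 'a) \<Rightarrow> 'b"
  assume X: "two_sided_subshift X" "infinite X" "mixing_sys shift_top X shift"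
    and sync: "synchronizing_subshift X" and \<pi>: "factor_map X Y g \<pi>" "\<forall>y\<in>Y. countable {x\<in>X. \<pi> x = y}"
  obtain s where "synchronizing_word X s" using sync unfolding synchronizing_subshift_def by blast
  from two_sided_subshift_factor[OF X this \<pi>]
  show "\<exists>\<epsilon>>0. \<exists>k::nat. k > 0 \<and> (\<exists>T. T \<subseteq> Y \<and> Y \<subseteq> closure T \<and> mycielski_set T \<and>
      (g ^^ k) ` T \<subseteq> T \<and> synd_eps_scrambled g \<epsilon> T)"
    by (rule subshift_factor.scrambled_set)
qed

end
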